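(* Let $\widetilde W=\widetilde W_H$ or $\widetilde W_L$, and let $\mathcal A=\sum_{j=0}^{2m}\partial^jF_j$ be a differential operator of order $2m$ in $\mathcal D(\widetilde W)$. Then there are $c_1,\dots,c_N\in\mathbb C$ and polynomials $q_1,\dots,q_N$ of degree less than $m$ such that $F_{2m}(x)=\mathrm{diag}(c_1\rho(x)^m,\dots,c_N\rho(x)^m)$, $F_m(x)=\mathrm{diag}(c_1(-2)^mx^m+q_1(x),\dots,c_N(-2)^mx^m+q_N(x))$ if $\widetilde W=\widetilde W_H$, and $F_m(x)=\mathrm{diag}(c_1(-1)^mx^m+q_1(x),\dots,c_N(-1)^mx^m+q_N(x))$ if $\widetilde W=\widetilde W_L$; moreover $\deg F_j<j$ for $m+1\le j\le 2m$.
   Context: $\widetilde W_H=\mathrm{diag}(e^{-x^2+2b_1x},\dots,e^{-x^2+2b_Nx})$ on $\mathbb R$ with $b_i$ pairwise distinct reals, and $\rho(x)=1$; $\widetilde W_L=\mathrm{diag}(e^{-x}x^{\alpha_1},\dots,e^{-x}x^{\alpha_N})$ on $(0,\infty)$ with $\alpha_i>-1$ and $\alpha_i-\alpha_j\notin\mathbb Z$ for $i\ne j$, and $\rho(x)=x$. For a weight matrix $W$ with monic orthogonal polynomials $P_n$ (w.r.t. $\langle P,Q\rangle=\int PWQ^*dx$), $\mathcal D(W)$ is the algebra of differential operators $D=\sum_j\partial^jF_j$ with matrix polynomial coefficients, acting on the right by $P\cdot D=\sum_j\partial^j(P)F_j$, such that $P_n\cdot D=\Lambda_n(D)P_n$ for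 all $n\ge0$ with constant matrices $\Lambda_n(D)$. *)

theory Defs
  imports "HOL-Analysis.Analysis" "HOL-Computational_Algebra.Polynomial"
begin

text \<open>N x N matrix polynomials are represented as complex poly ^'n^'n, with 'n a finite
  index type (N = CARD('n)).\<close>

type_synonym 'n mpoly = "complex poly ^'n^'n"

definition mat_eval :: "'n::finite mpoly \<Rightarrow> complex \<Rightarrow> complex^'n^'n" where
  "mat_eval P z = (\<chi> i j. poly (P$i$j) z)"

definition mat_deriv :: "'n::finite mpoly \<Rightarrow> 'n mpoly" where
  "mat_deriv P = (\<chi> i j. pderiv (P$i$j))"

definition const_mpoly :: "complex^'n^'n \<Rightarrow> 'n::finite mpoly" where
  "const_mpoly L = (\<chi> i j. [:L$i$j:])"

definition monic_mpoly :: "nat \<Rightarrow> 'n::finite mpoly \<Rightarrow> bool" where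
  "monic_mpoly n P \<longleftrightarrow> (\<forall>i j. degree (P$i$j) \<le> n \<and> coeff (P$i$j) n = (if i = j then 1 else 0))"

text \<open>Inner product for a diagonal weight W = diag(w_k) supported on S:
  <P,Q> = integral over S of P(x) W(x) Q(x)^* dx.\<close>
definition mip :: "real set \<Rightarrow> ('n \<Rightarrow> real \<Rightarrow> real) \<Rightarrow> 'n::finite mpoly \<Rightarrow> 'n mpoly \<Rightarrow> complex^'n^'n" where
  "mip S w P Q = (\<chi> i j. LINT x:S|lborel.
      (\<Sum>k\<in>UNIV. poly (P$i$k) (complex_of_real x) * complex_of_real (w k x)
                   * cnj (poly (Q$j$k) (complex_of_real x))))"

definition monic_OPS :: "real set \<Rightarrow> ('n \<Rightarrow> real \<Rightarrow> real) \<Rightarrow> (nat \<Rightarrow> 'n::finite mpoly) \<Rightarrow> bool" where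
  "monic_OPS S w P \<longleftrightarrow> (\<forall>n. monic_mpoly n (P n) \<and> (\<forall>k. k \<noteq> n \<longrightarrow> mip S w (P n) (P k) = 0))"

definition dop_act :: "(nat \<Rightarrow> 'n::finite mpoly) \<Rightarrow> nat \<Rightarrow> 'n mpoly \<Rightarrow> 'n mpoly" where
  "dop_act F M P = (\<Sum>j\<le>M. ((mat_deriv ^^ j) P) ** F j)"

definition in_DW :: "(nat \<Rightarrow> 'n::finite mpoly) \<Rightarrow> (nat \<Rightarrow> 'n mpoly) \<Rightarrow> nat \<Rightarrow> bool" where
  "in_DW P F M \<longleftrightarrow> (\<forall>n. \<exists>L::complex^'n^'n. dop_act F M (P n) = const_mpoly L ** P n)"

definition wH :: "('n \<Rightarrow> real) \<Rightarrow> 'n \<Rightarrow> real \<Rightarrow> real" where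
  "wH b k x = exp (- x\<^sup>2 + 2 * b k * x)"

definition wL :: "('n \<Rightarrow> real) \<Rightarrow> 'n \<Rightarrow> real \<Rightarrow> real" where
  "wL a k x = exp (- x) * x powr (a k)"

definition diag_mpoly :: "('n \<Rightarrow> complex poly) \<Rightarrow> 'n::finite mpoly" where
  "diag_mpoly d = (\<chi> i j. if i = j then d i else 0)"

end

theory Submission
  imports Defs "HOL-Probability.Distributions" "HOL-Real_Asymp.Real_Asymp"
begin

text \<open>
  As the weight is diagonal, so are the monic orthogonal polynomials:
  \<open>P n = diag (p n 1, \<dots>, p n N)\<close>, where \<open>p n i\<close> is monic orthogonal for the scalar weight
  \<open>w\<^sub>i\<close>. By symmetry of \<open>\<delta>\<^sub>i = \<partial>\<^sup>2 + (2b\<^sub>i - 2x)\<partial>\<close>, resp. \<open>\<delta>\<^sub>i = x\<partial>\<^sup>2 + (\<alpha>\<^sub>i + 1 - x)\<partial>\<close>,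
  with respect to \<open>w\<^sub>i\<close>, the \<open>p n i\<close> are eigenfunctions of \<open>\<delta>\<^sub>i\<close> with an eigenvalue
  (\<open>-2n\<close>, resp. \<open>-n\<close>) that does not depend on \<open>i\<close>.
  Entrywise, \<open>P n \<cdot> D = \<Lambda> n P n\<close> says that \<open>D\<^sub>i\<^sub>k = \<Sum>\<^sub>j \<partial>\<^sup>j F\<^sub>j[i,k]\<close> maps \<open>p n i\<close> to a
  multiple of \<open>p n k\<close>, so the commutator \<open>\<delta>\<^sub>k \<circ> D\<^sub>i\<^sub>k - D\<^sub>i\<^sub>k \<circ> \<delta>\<^sub>i\<close> kills every \<open>p n i\<close>,
  hence every polynomial, and all its coefficients vanish. Read off coefficientwise, this is
  a linear recurrence in two indices for the coefficients of the \<open>F\<^sub>j[i,k]\<close>. For \<open>i \<noteq> k\<close>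
  it forces \<open>F\<^sub>j[i,k] = 0\<close> because \<open>b\<^sub>i \<noteq> b\<^sub>k\<close>, resp. \<open>\<alpha>\<^sub>i - \<alpha>\<^sub>k \<notin> \<int>\<close>; for \<open>i = k\<close>
  (in the Hermite case after translating \<open>x\<close> by \<open>b\<^sub>i\<close>) it kills the coefficients above the
  diagonal and links the top coefficient of \<open>F\<^sub>m[i,i]\<close> to that of \<open>F\<^sub>2\<^sub>m[i,i]\<close> along the
  antidiagonal.\<close>

section \<open>Differential operators acting on scalar polynomials\<close>

definition scalar_dop_act :: "(nat \<Rightarrow> 'a::idom poly) \<Rightarrow> nat \<Rightarrow> 'a poly \<Rightarrow> 'a poly" where
  "scalar_dop_act f M q = (\<Sum>j\<le>M. (pderiv^^j) q * f j)"

lemma scalar_dop_act_add: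
  "scalar_dop_act f M (p + q) = scalar_dop_act f M p + scalar_dop_act f M q"
  by (simp add: scalar_dop_act_def higher_pderiv_add algebra_simps sum.distrib)

lemma scalar_dop_act_smult:
  "scalar_dop_act f M (smult c q) = smult c (scalar_dop_act f M q)"
  by (induction M) (simp_all add: scalar_dop_act_def higher_pderiv_smult smult_add_right)

lemma higher_pderiv_monom_self: "(pderiv^^j) (monom 1 j :: 'a::{idom,semiring_char_0} poly) = [:fact j:]"
  by (rule poly_eqI) (auto simp: coeff_higher_pderiv coeff_monom coeff_pCons pochhammer_fact split: nat.split)

lemma higher_pderiv_monom_eq_0: "j < i \<Longrightarrow> (pderiv^^i) (monom 1 j :: 'a::idom poly) = 0"
  by (rule poly_eqI) (auto simp: coeff_higher_pderiv coeff_monom)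

lemma higher_pderiv_linear_mult:
  "(pderiv^^j) ([:u,v:] * (pderiv^^(Suc k)) q) =
     [:u,v:] * (pderiv^^(Suc k + j)) q + smult (of_nat j * v) ((pderiv^^(k+j)) q)"
proof (induction j)
  case 0
  then show ?case by simp
next
  case (Suc j)
  have "(pderiv^^(Suc j)) ([:u,v:] * (pderiv^^(Suc k)) q) =
        pderiv ([:u,v:] * (pderiv^^(Suc k + j)) q + smult (of_nat j * v) ((pderiv^^(k+j)) q))"
    using Suc by simp
  also have "\<dots> = [:u,v:] * (pderiv^^(Suc (Suc k + j))) q + smult v ((pderiv^^(Suc k + j)) q)
        + smult (of_nat j * v) ((pderiv^^(Suc (k+j))) q)"
    by (simp add: pderiv_add pderiv_mult pderiv_smult pderiv_pCons del: funpow.simps)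
       (simp add: algebra_simps)
  also have "\<dots> = [:u,v:] * (pderiv^^(Suc k + Suc j)) q + smult (of_nat (Suc j) * v) ((pderiv^^(k + Suc j)) q)"
    by (simp add: algebra_simps smult_add_left del: funpow.simps)
  finally show ?case .
qed

text \<open>Test on \<open>x\<^sup>j\<close>, which all \<open>\<partial>\<^sup>i\<close> with \<open>i > j\<close> kill.\<close>
lemma scalar_dop_act_eq_0_imp_coeff_eq_0:
  fixes e :: "nat \<Rightarrow> 'a::field_char_0 poly"
  assumes vanish: "\<And>q. scalar_dop_act e N q = 0" and "j \<le> N"
  shows "e j = 0"
  using \<open>j \<le> N\<close>
proof (induction j rule: less_induct)
  case (less j)
  have "scalar_dop_act e N (monom 1 j) = (\<Sum>i\<in>{j}. (pderiv^^i) (monom 1 j) * e i)"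
    unfolding scalar_dop_act_def
  proof (rule sum.mono_neutral_right)
    show "\<forall>i\<in>{..N} - {j}. (pderiv ^^ i) (monom 1 j) * e i = 0"
      using less higher_pderiv_monom_eq_0[of j] by (auto simp: nat_neq_iff)
  qed (use less.prems in auto)
  then have "[:fact j:] * e j = 0"
    using vanish[of "monom 1 j"] by (simp add: higher_pderiv_monom_self)
  then show ?case by simp
qed

lemma linear_eq_0_if_eq_0_on_monic_basis:
  fixes L :: "'a::idom poly \<Rightarrow> 'a poly" and p :: "nat \<Rightarrow> 'a poly"
  assumes add: "\<And>a b. L (a + b) = L a + L b"
    and smult: "\<And>c a. L (smult c a) = smult c (L a)"
    and degree: "\<And>n. degree (p n) = n" and lead: "\<And>n. coeff (p n) n = 1"
    and basis: "\<And>n. L (p n) = 0"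
  shows "L q = 0"
proof (induction "degree q" arbitrary: q rule: less_induct)
  case less
  define r where "r = q - smult (coeff q (degree q)) (p (degree q))"
  have "L r = 0"
  proof (cases "r = 0")
    case True
    then show ?thesis using smult[of 0 0] by simp
  next
    case False
    have "coeff r (degree q) = 0" by (simp add: r_def lead)
    moreover have "degree r \<le> degree q"
      unfolding r_def by (rule degree_diff_le) (auto simp: degree)
    ultimately have "degree r < degree q"
      using False by (metis leading_coeff_0_iff nat_less_le)
    then show ?thesis using less by simp
  qed
  moreover have "q = r + smult (coeff q (degree q)) (p (degree q))" by (simp add: r_def)
  ultimately show ?case by (metis add smult basis add_0 smult_0_right)
qed

text \<open>The commutator \<open>T' \<circ> D - D \<circ> T\<close> kills the basis \<open>p\<close>, hence every polynomial.\<close>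
lemma intertwining_commutator_coeff_eq_0:
  fixes f e p p' :: "nat \<Rightarrow> 'a::field_char_0 poly" and T T' :: "'a poly \<Rightarrow> 'a poly"
  assumes commutator: "\<And>q. T' (scalar_dop_act f M q) - scalar_dop_act f M (T q) = scalar_dop_act e N q"
    and T_smult: "\<And>c q. T (smult c q) = smult c (T q)"
    and T'_smult: "\<And>c q. T' (smult c q) = smult c (T' q)"
    and intertwines: "\<And>n. scalar_dop_act f M (p n) = smult (\<Lambda> n) (p' n)"
    and eigen: "\<And>n. T (p n) = smult (\<mu> n) (p n)" and eigen': "\<And>n. T' (p' n) = smult (\<mu> n) (p' n)"
    and degree: "\<And>n. degree (p n) = n" and lead: "\<And>n. coeff (p n) n = 1"
    and "j \<le> N"
  shows "e j = 0"
proof (rule scalar_dop_act_eq_0_imp_coeff_eq_0[OF _ \<open>j \<le> N\<close>])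
  fix q
  show "scalar_dop_act e N q = 0"
  proof (rule linear_eq_0_if_eq_0_on_monic_basis[where L = "scalar_dop_act e N", OF _ _ degree lead])
    fix n
    have "scalar_dop_act e N (p n) = T' (smult (\<Lambda> n) (p' n)) - scalar_dop_act f M (smult (\<mu> n) (p n))"
      by (simp add: commutator[symmetric] intertwines eigen)
    also have "\<dots> = 0"
      by (simp add: T'_smult eigen' scalar_dop_act_smult intertwines mult.commute)
    finally show "scalar_dop_act e N (p n) = 0" .
  qed (simp_all add: scalar_dop_act_add scalar_dop_act_smult)
qed

lemma sum_atMost_regroup_shifted:
  fixes D X Y :: "nat \<Rightarrow> 'a::comm_ring_1"
  assumes "X (Suc M) = 0"
  shows "(\<Sum>j\<le>M. D j * X j + D (Suc j) * Y j) =
         (\<Sum>j\<le>Suc M. D j * (X j + (if j = 0 then 0 else Y (j-1))))"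
proof -
  have "(\<Sum>j\<le>Suc M. D j * (X j + (if j = 0 then 0 else Y (j-1)))) =
        (\<Sum>j\<le>Suc M. D j * X j) + (\<Sum>j\<le>Suc M. D j * (if j = 0 then 0 else Y (j-1)))"
    by (simp add: distrib_left sum.distrib)
  also have "(\<Sum>j\<le>Suc M. D j * X j) = (\<Sum>j\<le>M. D j * X j)"
    using assms by simp
  also have "(\<Sum>j\<le>Suc M. D j * (if j = 0 then 0 else Y (j-1))) = (\<Sum>j\<le>M. D (Suc j) * Y j)"
    by (subst sum.atMost_Suc_shift) simp
  finally show ?thesis by (simp add: sum.distrib)
qed

section \<open>The Hermite and Laguerre operators\<close>

definition hermite_op :: "complex \<Rightarrow> complex poly \<Rightarrow> complex poly" where
  "hermite_op c q = pderiv (pderiv q) + [:2*c, -2:] * pderiv q"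

definition laguerre_op :: "complex \<Rightarrow> complex poly \<Rightarrow> complex poly" where
  "laguerre_op \<alpha> q = [:0, 1:] * pderiv (pderiv q) + [:\<alpha>+1, -1:] * pderiv q"

lemma coeff_linear_mult:
  "coeff ([:u,v:] * p) r = u * coeff p r + (if r = 0 then 0 else v * coeff p (r - 1))"
  by (cases r) (simp_all add: coeff_pCons)

lemma coeff_hermite_op:
  "coeff (hermite_op c p) r =
     of_nat ((r+1)*(r+2)) * coeff p (r+2) + 2 * c * of_nat (r+1) * coeff p (r+1) - 2 * of_nat r * coeff p r"
  unfolding hermite_op_def by (cases r) (simp_all add: coeff_linear_mult coeff_pderiv algebra_simps)

lemma coeff_laguerre_op:
  "coeff (laguerre_op \<alpha> p) r = (of_nat r + \<alpha> + 1) * of_nat (r+1) * coeff p (r+1) - of_nat r * coeff p r"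
  unfolding laguerre_op_def by (cases r) (simp_all add: coeff_linear_mult coeff_pderiv algebra_simps)

lemma degree_hermite_op_le: "degree (hermite_op c p) \<le> degree p"
  by (rule degree_le) (simp add: coeff_hermite_op coeff_eq_0)

lemma degree_laguerre_op_le: "degree (laguerre_op \<alpha> p) \<le> degree p"
  by (rule degree_le) (simp add: coeff_laguerre_op coeff_eq_0)

lemma coeff_hermite_op_top: "degree p \<le> n \<Longrightarrow> coeff (hermite_op c p) n = - 2 * of_nat n * coeff p n"
  by (simp add: coeff_hermite_op coeff_eq_0)

lemma coeff_laguerre_op_top: "degree p \<le> n \<Longrightarrow> coeff (laguerre_op \<alpha> p) n = - of_nat n * coeff p n"
  by (simp add: coeff_laguerre_op coeff_eq_0)

lemma hermite_op_add: "hermite_op c (p + q) = hermite_op c p + hermite_op c q"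
  by (rule poly_eqI) (simp add: coeff_hermite_op algebra_simps)

lemma hermite_op_diff: "hermite_op c (p - q) = hermite_op c p - hermite_op c q"
  by (rule poly_eqI) (simp add: coeff_hermite_op algebra_simps)

lemma hermite_op_smult: "hermite_op c (smult u p) = smult u (hermite_op c p)"
  by (rule poly_eqI) (simp add: coeff_hermite_op algebra_simps)

lemma hermite_op_sum: "hermite_op c (sum g A) = (\<Sum>x\<in>A. hermite_op c (g x))"
  by (induction A rule: infinite_finite_induct) (auto simp: hermite_op_add hermite_op_smult[of c 0, simplified])

lemma laguerre_op_add: "laguerre_op \<alpha> (p + q) = laguerre_op \<alpha> p + laguerre_op \<alpha> q"
  by (rule poly_eqI) (simp add: coeff_laguerre_op algebra_simps)

lemma laguerre_op_diff: "laguerre_op \<alpha> (p - q) = laguerre_op \<alpha> p - laguerre_op \<alpha> q"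
  by (rule poly_eqI) (simp add: coeff_laguerre_op algebra_simps)

lemma laguerre_op_smult: "laguerre_op \<alpha> (smult u p) = smult u (laguerre_op \<alpha> p)"
  by (rule poly_eqI) (simp add: coeff_laguerre_op algebra_simps)

lemma laguerre_op_sum: "laguerre_op \<alpha> (sum g A) = (\<Sum>x\<in>A. laguerre_op \<alpha> (g x))"
  by (induction A rule: infinite_finite_induct) (auto simp: laguerre_op_add laguerre_op_smult[of \<alpha> 0, simplified])

lemma higher_pderiv_hermite_op:
  "(pderiv^^j) (hermite_op c q) = (pderiv^^(Suc (Suc j))) q + [:2*c,-2:] * (pderiv^^(Suc j)) q
     + smult (-2 * of_nat j) ((pderiv^^j) q)"
  using higher_pderiv_linear_mult[of j "2*c" "-2" 0 q]
  by (simp add: hermite_op_def higher_pderiv_add funpow_Suc_right del: funpow.simps)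
     (simp add: mult.commute)

lemma higher_pderiv_laguerre_op:
  "(pderiv^^j) (laguerre_op \<alpha> q) = [:0,1:] * (pderiv^^(Suc (Suc j))) q + smult (of_nat j) ((pderiv^^(Suc j)) q)
     + [:\<alpha>+1,-1:] * (pderiv^^(Suc j)) q + smult (- of_nat j) ((pderiv^^j) q)"
  using higher_pderiv_linear_mult[of j 0 1 1 q] higher_pderiv_linear_mult[of j "\<alpha>+1" "-1" 0 q]
  by (simp add: laguerre_op_def higher_pderiv_add funpow_Suc_right numeral_2_eq_2
      del: funpow.simps mult_pCons_left mult_pCons_right)

definition hermite_commutator_coeff ::
    "complex \<Rightarrow> complex \<Rightarrow> (nat \<Rightarrow> complex poly) \<Rightarrow> nat \<Rightarrow> complex poly" where
  "hermite_commutator_coeff c c' f j =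
     pderiv (pderiv (f j)) + [:2*c',-2:] * pderiv (f j) + smult (2 * of_nat j) (f j)
     + (if j = 0 then 0 else smult 2 (pderiv (f (j-1))) + smult (2*(c'-c)) (f (j-1)))"

definition laguerre_commutator_coeff ::
    "complex \<Rightarrow> complex \<Rightarrow> (nat \<Rightarrow> complex poly) \<Rightarrow> nat \<Rightarrow> complex poly" where
  "laguerre_commutator_coeff \<alpha> \<alpha>' f j =
     [:0,1:] * pderiv (pderiv (f j)) + [:\<alpha>'+1,-1:] * pderiv (f j) + smult (of_nat j) (f j)
     + (if j = 0 then 0
        else smult 2 ([:0,1:] * pderiv (f (j-1))) + smult (\<alpha>' - \<alpha> - of_nat (j-1)) (f (j-1)))"

lemma hermite_op_commutator_term:
  "hermite_op c' ((pderiv^^j) q * g) - (pderiv^^j) (hermite_op c q) * g =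
   (pderiv^^j) q * (pderiv (pderiv g) + [:2*c',-2:] * pderiv g + smult (2 * of_nat j) g)
   + (pderiv^^(Suc j)) q * (smult 2 (pderiv g) + smult (2*(c'-c)) g)"
proof -
  define D0 D1 D2 where "D0 = (pderiv^^j) q" and "D1 = pderiv D0" and "D2 = pderiv D1"
  have D: "(pderiv^^(Suc j)) q = D1" "(pderiv^^(Suc (Suc j))) q = D2"
    by (simp_all add: D0_def D1_def D2_def)
  have product_rule: "pderiv (pderiv (D0 * g)) = D2 * g + 2 * (D1 * pderiv g) + D0 * pderiv (pderiv g)"
    "pderiv (D0 * g) = D1 * g + D0 * pderiv g"
    by (simp_all add: D1_def D2_def pderiv_mult pderiv_add algebra_simps mult_2
        del: mult_pCons_left mult_pCons_right)
  have const: "smult u p = [:u:] * p" "[:2:] = (2::complex poly)"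
    "[:-2 * of_nat j:] = - 2 * ([:of_nat j:] :: complex poly)"
    "[:2 * of_nat j:] = 2 * ([:of_nat j:] :: complex poly)"
    "[:2*c',-2:] = [:2*c,-2:] + [:2*(c'-c):]" for u and p :: "complex poly"
    by (simp_all add: numeral_poly algebra_simps)
  show ?thesis
    unfolding higher_pderiv_hermite_op D D0_def[symmetric]
    unfolding hermite_op_def product_rule(1) unfolding product_rule(2) const
    by (simp only: distrib_left distrib_right) algebra
qed

lemma laguerre_op_commutator_term:
  "laguerre_op \<alpha>' ((pderiv^^j) q * g) - (pderiv^^j) (laguerre_op \<alpha> q) * g =
   (pderiv^^j) q * ([:0,1:] * pderiv (pderiv g) + [:\<alpha>'+1,-1:] * pderiv g + smult (of_nat j) g)
   + (pderiv^^(Suc j)) q * (smult 2 ([:0,1:] * pderiv g) + smult (\<alpha>' - \<alpha> - of_nat j) g)"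
proof -
  define D0 D1 D2 where "D0 = (pderiv^^j) q" and "D1 = pderiv D0" and "D2 = pderiv D1"
  have D: "(pderiv^^(Suc j)) q = D1" "(pderiv^^(Suc (Suc j))) q = D2"
    by (simp_all add: D0_def D1_def D2_def)
  have product_rule: "pderiv (pderiv (D0 * g)) = D2 * g + 2 * (D1 * pderiv g) + D0 * pderiv (pderiv g)"
    "pderiv (D0 * g) = D1 * g + D0 * pderiv g"
    by (simp_all add: D1_def D2_def pderiv_mult pderiv_add algebra_simps mult_2
        del: mult_pCons_left mult_pCons_right)
  have const: "smult u p = [:u:] * p" "[:2:] = (2::complex poly)"
    "[:- of_nat j:] = - ([:of_nat j:] :: complex poly)"
    "[:\<alpha>' - \<alpha> - of_nat j:] = [:\<alpha>' - \<alpha>:] - ([:of_nat j:] :: complex poly)"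
    "[:\<alpha>'+1,-1:] = [:\<alpha>+1,-1:] + [:\<alpha>'-\<alpha>:]" for u and p :: "complex poly"
    by (simp_all add: numeral_poly algebra_simps)
  show ?thesis
    unfolding higher_pderiv_laguerre_op D D0_def[symmetric]
    unfolding laguerre_op_def product_rule(1) unfolding product_rule(2) const
    by (simp only: distrib_left distrib_right) algebra
qed

lemma hermite_op_commutator:
  assumes "f (Suc M) = 0"
  shows "hermite_op c' (scalar_dop_act f M q) - scalar_dop_act f M (hermite_op c q) =
    scalar_dop_act (hermite_commutator_coeff c c' f) (Suc M) q"
proof -
  have "hermite_op c' (scalar_dop_act f M q) - scalar_dop_act f M (hermite_op c q) =
     (\<Sum>j\<le>M. hermite_op c' ((pderiv^^j) q * f j) - (pderiv^^j) (hermite_op c q) * f j)"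
    by (simp add: scalar_dop_act_def hermite_op_sum sum_subtractf)
  also have "\<dots> = (\<Sum>j\<le>Suc M. (pderiv^^j) q * hermite_commutator_coeff c c' f j)"
    unfolding hermite_op_commutator_term hermite_commutator_coeff_def
    by (rule sum_atMost_regroup_shifted) (simp add: assms)
  finally show ?thesis by (simp add: scalar_dop_act_def)
qed

lemma laguerre_op_commutator:
  assumes "f (Suc M) = 0"
  shows "laguerre_op \<alpha>' (scalar_dop_act f M q) - scalar_dop_act f M (laguerre_op \<alpha> q) =
    scalar_dop_act (laguerre_commutator_coeff \<alpha> \<alpha>' f) (Suc M) q"
proof -
  have "laguerre_op \<alpha>' (scalar_dop_act f M q) - scalar_dop_act f M (laguerre_op \<alpha> q) =
     (\<Sum>j\<le>M. laguerre_op \<alpha>' ((pderiv^^j) q * f j) - (pderiv^^j) (laguerre_op \<alpha> q) * f j)"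
    by (simp add: scalar_dop_act_def laguerre_op_sum sum_subtractf)
  also have "\<dots> = (\<Sum>j\<le>Suc M. (pderiv^^j) q * laguerre_commutator_coeff \<alpha> \<alpha>' f j)"
    unfolding laguerre_op_commutator_term laguerre_commutator_coeff_def
    by (rule sum_atMost_regroup_shifted) (simp add: assms)
  finally show ?thesis by (simp add: scalar_dop_act_def)
qed

lemma hermite_commutator_coeff_eq_0:
  assumes f_zero: "\<And>j. M < j \<Longrightarrow> f j = 0"
    and intertwines: "\<And>n. scalar_dop_act f M (p n) = smult (\<Lambda> n) (p' n)"
    and eigen: "\<And>n. hermite_op c (p n) = smult (\<mu> n) (p n)"
    and eigen': "\<And>n. hermite_op c' (p' n) = smult (\<mu> n) (p' n)"
    and degree: "\<And>n. degree (p n) = n" and lead: "\<And>n. coeff (p n) n = 1"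
  shows "hermite_commutator_coeff c c' f j = 0"
proof (cases "j \<le> Suc M")
  case True
  show ?thesis
    by (rule intertwining_commutator_coeff_eq_0[OF hermite_op_commutator _ _ intertwines eigen eigen'
          degree lead True])
       (simp_all add: f_zero hermite_op_smult)
next
  case False
  then show ?thesis by (simp add: hermite_commutator_coeff_def f_zero)
qed

lemma laguerre_commutator_coeff_eq_0:
  assumes f_zero: "\<And>j. M < j \<Longrightarrow> f j = 0"
    and intertwines: "\<And>n. scalar_dop_act f M (p n) = smult (\<Lambda> n) (p' n)"
    and eigen: "\<And>n. laguerre_op \<alpha> (p n) = smult (\<mu> n) (p n)"
    and eigen': "\<And>n. laguerre_op \<alpha>' (p' n) = smult (\<mu> n) (p' n)"
    and degree: "\<And>n. degree (p n) = n" and lead: "\<And>n. coeff (p n) n = 1"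
  shows "laguerre_commutator_coeff \<alpha> \<alpha>' f j = 0"
proof (cases "j \<le> Suc M")
  case True
  show ?thesis
    by (rule intertwining_commutator_coeff_eq_0[OF laguerre_op_commutator _ _ intertwines eigen eigen'
          degree lead True])
       (simp_all add: f_zero laguerre_op_smult)
next
  case False
  then show ?thesis by (simp add: laguerre_commutator_coeff_def f_zero)
qed

section \<open>The coefficient recurrences\<close>

text \<open>These are the coefficients of \<open>x\<^sup>r\<close> in \<^const>\<open>hermite_commutator_coeff\<close> after the
  translation \<open>x \<mapsto> x + c'\<close> (with \<open>h = 2 (c' - c)\<close>), resp. in
  \<^const>\<open>laguerre_commutator_coeff\<close> (with \<open>d = \<alpha>' - \<alpha>\<close>).\<close>

definition hermite_coeff_rec :: "complex \<Rightarrow> (nat \<Rightarrow> nat \<Rightarrow> complex) \<Rightarrow> bool" where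
  "hermite_coeff_rec h A \<longleftrightarrow> (\<forall>j r.
      of_nat ((r+1)*(r+2)) * A j (r+2) + 2 * (of_nat j - of_nat r) * A j r
      + (if j = 0 then 0 else 2 * of_nat (r+1) * A (j-1) (r+1) + h * A (j-1) r) = 0)"

definition laguerre_coeff_rec :: "complex \<Rightarrow> complex \<Rightarrow> (nat \<Rightarrow> nat \<Rightarrow> complex) \<Rightarrow> bool" where
  "laguerre_coeff_rec \<alpha> d A \<longleftrightarrow> (\<forall>j r.
      (of_nat r + \<alpha> + 1) * of_nat (r+1) * A j (r+1) + (of_nat j - of_nat r) * A j r
      + (if j = 0 then 0 else (2 * of_nat r + d - of_nat (j-1)) * A (j-1) r) = 0)"

lemma hermite_coeff_recD:
  assumes "hermite_coeff_rec h A" "0 < j"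
  shows "of_nat ((r+1)*(r+2)) * A j (r+2) + 2 * (of_nat j - of_nat r) * A j r
      + 2 * of_nat (r+1) * A (j-1) (r+1) + h * A (j-1) r = 0"
  using assms(1)[unfolded hermite_coeff_rec_def, rule_format, where j = j and r = r] assms(2) by (simp add: add.assoc)

lemma laguerre_coeff_recD:
  assumes "laguerre_coeff_rec \<alpha> d A" "0 < j"
  shows "(of_nat r + \<alpha> + 1) * of_nat (r+1) * A j (r+1) + (of_nat j - of_nat r) * A j r
      + (2 * of_nat r + d - of_nat (j-1)) * A (j-1) r = 0"
  using assms(1)[unfolded laguerre_coeff_rec_def, rule_format, where j = j and r = r] assms(2) by simp

text \<open>Downward induction on the distance \<open>r - j\<close> to the diagonal, which is bounded since
  every row has bounded support.\<close>
lemma eq_0_above_diagonal: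
  fixes A :: "nat \<Rightarrow> nat \<Rightarrow> 'a::zero"
  assumes bounded: "\<And>j r. R < r \<Longrightarrow> A j r = 0"
    and step: "\<And>j r. j < r \<Longrightarrow> (\<And>j' r'. r - j < r' - j' \<Longrightarrow> A j' r' = 0) \<Longrightarrow> A j r = 0"
    and "j < r"
  shows "A j r = 0"
proof -
  have "\<forall>j r. r - j = d \<longrightarrow> j < r \<longrightarrow> A j r = 0" for d
  proof (induction d rule: nat_descend_induct[where n = R])
    case (base d)
    then show ?case using bounded by auto
  next
    case (descend d)
    show ?case
    proof (intro allI impI)
      fix j r assume "r - j = d" "j < r"
      show "A j r = 0"
      proof (rule step[OF \<open>j < r\<close>])
        fix j' r' assume "r - j < r' - j'"
        then show "A j' r' = 0" using descend.IH[of "r' - j'"] \<open>r - j = d\<close> by auto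
      qed
    qed
  qed
  then show ?thesis using \<open>j < r\<close> by blast
qed

lemma hermite_coeff_rec_above_diagonal:
  assumes rec: "hermite_coeff_rec h A" and bounded: "\<And>j r. R < r \<Longrightarrow> A j r = 0" and "j < r"
  shows "A j r = 0"
proof (rule eq_0_above_diagonal[OF bounded _ \<open>j < r\<close>])
  fix j r assume jr: "j < r" and IH: "\<And>j' r'. r - j < r' - j' \<Longrightarrow> A j' r' = 0"
  have "A j (r+2) = 0" "j \<noteq> 0 \<Longrightarrow> A (j-1) (r+1) = 0" "j \<noteq> 0 \<Longrightarrow> A (j-1) r = 0"
    using jr by (auto intro!: IH)
  moreover have "of_nat ((r+1)*(r+2)) * A j (r+2) + 2 * (of_nat j - of_nat r) * A j r
      + (if j = 0 then 0 else 2 * of_nat (r+1) * A (j-1) (r+1) + h * A (j-1) r) = 0"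
    using rec unfolding hermite_coeff_rec_def by blast
  ultimately have "2 * (of_nat j - of_nat r) * A j r = 0" by (auto split: if_splits)
  then show "A j r = 0" using jr by simp
qed

lemma laguerre_coeff_rec_above_diagonal:
  assumes rec: "laguerre_coeff_rec \<alpha> d A" and bounded: "\<And>j r. R < r \<Longrightarrow> A j r = 0" and "j < r"
  shows "A j r = 0"
proof (rule eq_0_above_diagonal[OF bounded _ \<open>j < r\<close>])
  fix j r assume jr: "j < r" and IH: "\<And>j' r'. r - j < r' - j' \<Longrightarrow> A j' r' = 0"
  have "A j (r+1) = 0" "j \<noteq> 0 \<Longrightarrow> A (j-1) r = 0"
    using jr by (auto intro!: IH)
  moreover have "(of_nat r + \<alpha> + 1) * of_nat (r+1) * A j (r+1) + (of_nat j - of_nat r) * A j r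
      + (if j = 0 then 0 else (2 * of_nat r + d - of_nat (j-1)) * A (j-1) r) = 0"
    using rec unfolding laguerre_coeff_rec_def by blast
  ultimately have "(of_nat j - of_nat r) * A j r = 0" by (auto split: if_splits)
  then show "A j r = 0" using jr by simp
qed

lemma hermite_coeff_rec_eq_0_from_diagonal:
  assumes rec: "hermite_coeff_rec h A" and bounded: "\<And>j r. R < r \<Longrightarrow> A j r = 0"
    and diagonal: "\<And>j. T \<le> j \<Longrightarrow> A j j = 0" and "T \<le> r"
  shows "A j r = 0"
  using \<open>T \<le> r\<close>
proof (induction "j - r" arbitrary: j r rule: less_induct)
  case less
  consider "j < r" | "j = r" | "r < j" by linarith
  then show ?case
  proof cases
    case 1
    then show ?thesis using hermite_coeff_rec_above_diagonal[OF rec bounded] by blast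
  next
    case 2
    then show ?thesis using diagonal less.prems by simp
  next
    case 3
    have "A j (r+2) = 0" "A (j-1) (r+1) = 0" "A (j-1) r = 0"
      using 3 less.prems by (auto intro!: less.hyps)
    then have "2 * (of_nat j - of_nat r) * A j r = 0"
      using hermite_coeff_recD[OF rec, of j r] 3 by simp
    then show ?thesis using 3 by simp
  qed
qed

text \<open>For \<open>h \<noteq> 0\<close> the recurrence along the column of the last nonzero diagonal entry
  \<open>A T T\<close> reads \<open>2 (s+1) A (T+s+1) T = - h A (T+s) T\<close>, so that column would never vanish.\<close>
lemma hermite_coeff_rec_eq_0:
  assumes rec: "hermite_coeff_rec h A" and "h \<noteq> 0"
    and bounded: "\<And>j r. R < r \<Longrightarrow> A j r = 0" and rows: "\<And>j r. M < j \<Longrightarrow> A j r = 0"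
  shows "A j r = 0"
proof -
  have diagonal: "A T T = 0" for T
  proof (induction T rule: nat_descend_induct[where n = M])
    case (base T)
    then show ?case by (rule rows)
  next
    case (descend T)
    have column: "A i r = 0" if "T < r" for i r
      using hermite_coeff_rec_eq_0_from_diagonal[OF rec bounded, where T = "Suc T"] descend.IH that by simp
    have column_nonzero: "A (T+s) T \<noteq> 0" if "A T T \<noteq> 0" for s
    proof (induction s)
      case 0
      then show ?case using that by simp
    next
      case (Suc s)
      have "2 * of_nat (Suc s) * A (T + Suc s) T + h * A (T+s) T = 0"
        using hermite_coeff_recD[OF rec, of "T + Suc s" T] column by simp
      then show ?case using Suc \<open>h \<noteq> 0\<close> by auto
    qed
    then show ?case using column_nonzero[of "Suc M"] rows[of "T + Suc M" T] by auto
  qed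
  show ?thesis
    by (rule hermite_coeff_rec_eq_0_from_diagonal[OF rec bounded, where T = 0]) (simp_all add: diagonal)
qed

lemma hermite_coeff_rec_subdiagonal_eq_0:
  assumes rec: "hermite_coeff_rec 0 A" and diagonal: "\<And>j. T < j \<Longrightarrow> A j j = 0"
    and "T + s < j" "2 * s \<le> j"
  shows "A j (j - 2 * s) = 0"
  using assms(3,4)
proof (induction s arbitrary: j)
  case 0
  then show ?case using diagonal by simp
next
  case (Suc s)
  define r where "r = j - 2 * Suc s"
  have r: "r + 2 = j - 2 * s" "r + 1 = (j - 1) - 2 * s" "r < j"
    using Suc.prems by (auto simp: r_def)
  have "A j (r+2) = 0" unfolding r(1) by (rule Suc.IH) (use Suc.prems in auto)
  moreover have "A (j-1) (r+1) = 0" unfolding r(2) by (rule Suc.IH) (use Suc.prems in auto)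
  ultimately have "2 * (of_nat j - of_nat r) * A j r = 0"
    using hermite_coeff_recD[OF rec, of j r] \<open>r < j\<close> by simp
  then show ?case using \<open>r < j\<close> by (simp add: r_def)
qed

lemma hermite_coeff_rec_antidiagonal:
  assumes rec: "hermite_coeff_rec 0 A" and diagonal: "\<And>j. T < j \<Longrightarrow> A j j = 0" and "s \<le> T"
  shows "A (T+s) (T-s) * fact s * (-2)^s = of_nat (\<Prod>i=0..<s. T - i) * A T T"
  using \<open>s \<le> T\<close>
proof (induction s)
  case 0
  then show ?case by simp
next
  case (Suc s)
  define j r where "j = T + Suc s" and "r = T - Suc s"
  have r: "r + 2 = j - 2 * s" "j - 1 = T + s" "r + 1 = T - s"
    "of_nat j - of_nat r = (2 * of_nat (Suc s) :: complex)"
    using Suc.prems by (auto simp: r_def j_def of_nat_diff)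
  have "A j (r+2) = 0"
    unfolding r(1) using Suc.prems by (intro hermite_coeff_rec_subdiagonal_eq_0[OF rec diagonal]) (auto simp: j_def)
  then have "4 * of_nat (Suc s) * A j r + 2 * of_nat (T - s) * A (T+s) (T-s) = 0"
    using hermite_coeff_recD[OF rec, of j r] unfolding r(2,3,4) by (simp add: j_def algebra_simps)
  then have "2 * (A j r * of_nat (Suc s) * (-2)) = 2 * (of_nat (T - s) * A (T+s) (T-s))"
    by algebra
  then have step: "A j r * of_nat (Suc s) * (-2) = of_nat (T - s) * A (T+s) (T-s)"
    by (metis mult_left_cancel zero_neq_numeral)
  have "A j r * fact (Suc s) * (-2)^(Suc s) = (A j r * of_nat (Suc s) * (-2)) * fact s * (-2)^s"
    by (simp add: algebra_simps)
  also have "\<dots> = of_nat (T - s) * (A (T+s) (T-s) * fact s * (-2)^s)"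
    unfolding step by (simp add: algebra_simps)
  also have "\<dots> = of_nat (\<Prod>i=0..<Suc s. T - i) * A T T"
    using Suc by (simp add: prod.atLeast0_lessThan_Suc algebra_simps)
  finally show ?case by (simp add: j_def r_def)
qed

lemma hermite_coeff_rec_diagonal_from_top:
  assumes rec: "hermite_coeff_rec 0 A" and diagonal: "\<And>j. T < j \<Longrightarrow> A j j = 0"
  shows "A T T = (-2)^T * A (2*T) 0"
proof -
  have "A (T+T) (T-T) * fact T * (-2)^T = of_nat (\<Prod>i=0..<T. T - i) * A T T"
    by (rule hermite_coeff_rec_antidiagonal[OF rec diagonal order_refl])
  then have "A (T+T) 0 * (-2)^T = A T T"
    by (simp add: fact_prod_rev[of T] algebra_simps)
  then show ?thesis by (metis mult_2 mult.commute)
qed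

lemma hermite_coeff_rec_top_row:
  assumes rec: "hermite_coeff_rec 0 A" and rows: "\<And>j r. M < j \<Longrightarrow> A j r = 0" and "0 < r"
  shows "A M r = 0"
  using hermite_coeff_recD[OF rec, of "Suc M" "r - 1"] rows \<open>0 < r\<close> by simp

lemma hermite_coeff_rec_diagonal_eq_0:
  assumes rec: "hermite_coeff_rec 0 A" and rows: "\<And>j r. 2*m < j \<Longrightarrow> A j r = 0" and "m < j"
  shows "A j j = 0"
  using \<open>m < j\<close>
proof (induction j rule: nat_descend_induct[where n = "2*m"])
  case (base T)
  then show ?case using rows by blast
next
  case (descend T)
  have "A T T = (-2)^T * A (2*T) 0"
    by (rule hermite_coeff_rec_diagonal_from_top[OF rec]) (use descend in auto)
  then show ?case using rows[of "2*T" 0] descend.prems by simp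
qed

lemma laguerre_coeff_rec_eq_0_from_diagonal:
  assumes rec: "laguerre_coeff_rec \<alpha> d A" and bounded: "\<And>j r. R < r \<Longrightarrow> A j r = 0"
    and diagonal: "\<And>j. T \<le> j \<Longrightarrow> A j j = 0" and "T \<le> r"
  shows "A j r = 0"
  using \<open>T \<le> r\<close>
proof (induction "j - r" arbitrary: j r rule: less_induct)
  case less
  consider "j < r" | "j = r" | "r < j" by linarith
  then show ?case
  proof cases
    case 1
    then show ?thesis using laguerre_coeff_rec_above_diagonal[OF rec bounded] by blast
  next
    case 2
    then show ?thesis using diagonal less.prems by simp
  next
    case 3
    have "A j (r+1) = 0" "A (j-1) r = 0"
      using 3 less.prems by (auto intro!: less.hyps)
    then have "(of_nat j - of_nat r) * A j r = 0"
      using laguerre_coeff_recD[OF rec, of j r] 3 by simp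
    then show ?thesis using 3 by simp
  qed
qed

text \<open>Along the column of the last nonzero diagonal entry \<open>A T T\<close> the recurrence reads
  \<open>(s+1) A (T+s+1) T = (s - T - d) A (T+s) T\<close>, whose factor never vanishes for \<open>d \<notin> \<int>\<close>.\<close>
lemma laguerre_coeff_rec_eq_0:
  assumes rec: "laguerre_coeff_rec \<alpha> d A" and "d \<notin> \<int>"
    and bounded: "\<And>j r. R < r \<Longrightarrow> A j r = 0" and rows: "\<And>j r. M < j \<Longrightarrow> A j r = 0"
  shows "A j r = 0"
proof -
  have diagonal: "A T T = 0" for T
  proof (induction T rule: nat_descend_induct[where n = M])
    case (base T)
    then show ?case by (rule rows)
  next
    case (descend T)
    have column: "A i r = 0" if "T < r" for i r
      using laguerre_coeff_rec_eq_0_from_diagonal[OF rec bounded, where T = "Suc T"] descend.IH that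
      by simp
    have column_nonzero: "A (T+s) T \<noteq> 0" if "A T T \<noteq> 0" for s
    proof (induction s)
      case 0
      then show ?case using that by simp
    next
      case (Suc s)
      have "of_nat (Suc s) * A (T + Suc s) T + (2 * of_nat T + d - of_nat (T + s)) * A (T+s) T = 0"
        using laguerre_coeff_recD[OF rec, of "T + Suc s" T] column by simp
      moreover have "2 * of_nat T + d - of_nat (T + s) \<noteq> 0"
      proof
        assume "2 * of_nat T + d - of_nat (T + s) = 0"
        then have "d = of_int (int (T + s) - 2 * int T)" by (simp add: algebra_simps)
        then show False using \<open>d \<notin> \<int>\<close> by simp
      qed
      ultimately show ?case using Suc by auto
    qed
    then show ?case using column_nonzero[of "Suc M"] rows[of "T + Suc M" T] by auto
  qed
  show ?thesis
    by (rule laguerre_coeff_rec_eq_0_from_diagonal[OF rec bounded, where T = 0]) (simp_all add: diagonal)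
qed

lemma laguerre_coeff_rec_subdiagonal_eq_0:
  assumes rec: "laguerre_coeff_rec \<alpha> 0 A" and diagonal: "\<And>j. T < j \<Longrightarrow> A j j = 0"
    and "T + s < j" "s \<le> j"
  shows "A j (j - s) = 0"
  using assms(3,4)
proof (induction s arbitrary: j)
  case 0
  then show ?case using diagonal by simp
next
  case (Suc s)
  define r where "r = j - Suc s"
  have r: "r + 1 = j - s" "r = (j - 1) - s" "r < j"
    using Suc.prems by (auto simp: r_def)
  have "A j (r+1) = 0" unfolding r(1) by (rule Suc.IH) (use Suc.prems in auto)
  moreover have "A (j-1) r = 0" unfolding r(2) by (rule Suc.IH) (use Suc.prems in auto)
  ultimately have "(of_nat j - of_nat r) * A j r = 0"
    using laguerre_coeff_recD[OF rec, of j r] \<open>r < j\<close> by simp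
  then show ?case using \<open>r < j\<close> by (simp add: r_def)
qed

lemma laguerre_coeff_rec_antidiagonal:
  assumes rec: "laguerre_coeff_rec \<alpha> 0 A" and diagonal: "\<And>j. T < j \<Longrightarrow> A j j = 0" and "s \<le> T"
  shows "A (T+s) T * fact s * (-1)^s = of_nat (\<Prod>i=0..<s. T - i) * A T T"
  using \<open>s \<le> T\<close>
proof (induction s)
  case 0
  then show ?case by simp
next
  case (Suc s)
  define j where "j = T + Suc s"
  have j: "T + 1 = j - s" "j - 1 = T + s" "of_nat j - of_nat T = (of_nat (Suc s) :: complex)"
    "(2 * of_nat T + 0 - of_nat (T + s) :: complex) = of_nat (T - s)"
    using Suc.prems by (auto simp: j_def of_nat_diff)
  have "A j (T+1) = 0"
    unfolding j(1) using Suc.prems by (intro laguerre_coeff_rec_subdiagonal_eq_0[OF rec diagonal]) (auto simp: j_def)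
  then have "of_nat (Suc s) * A j T + of_nat (T - s) * A (T+s) T = 0"
    using laguerre_coeff_recD[OF rec, of j T] unfolding j(2,3,4) by (simp add: j_def)
  then have step: "A j T * of_nat (Suc s) * (-1) = of_nat (T - s) * A (T+s) T"
    by (simp add: algebra_simps add_eq_0_iff)
  have "A j T * fact (Suc s) * (-1)^(Suc s) = (A j T * of_nat (Suc s) * (-1)) * fact s * (-1)^s"
    by (simp add: algebra_simps)
  also have "\<dots> = of_nat (T - s) * (A (T+s) T * fact s * (-1)^s)"
    unfolding step by (simp add: algebra_simps)
  also have "\<dots> = of_nat (\<Prod>i=0..<Suc s. T - i) * A T T"
    using Suc by (simp add: prod.atLeast0_lessThan_Suc algebra_simps)
  finally show ?case by (simp add: j_def)
qed

lemma laguerre_coeff_rec_diagonal_from_top: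
  assumes rec: "laguerre_coeff_rec \<alpha> 0 A" and diagonal: "\<And>j. T < j \<Longrightarrow> A j j = 0"
  shows "A T T = (-1)^T * A (2*T) T"
proof -
  have "A (T+T) T * fact T * (-1)^T = of_nat (\<Prod>i=0..<T. T - i) * A T T"
    by (rule laguerre_coeff_rec_antidiagonal[OF rec diagonal order_refl])
  then have "A (T+T) T * (-1)^T = A T T"
    by (simp add: fact_prod_rev[of T] algebra_simps)
  then show ?thesis by (metis mult_2 mult.commute)
qed

lemma laguerre_coeff_rec_top_row:
  assumes rec: "laguerre_coeff_rec \<alpha> 0 A" and rows: "\<And>j r. 2*m < j \<Longrightarrow> A j r = 0" and "r \<noteq> m"
  shows "A (2*m) r = 0"
proof -
  have "(2 * of_nat r - of_nat (2*m)) * A (2*m) r = 0"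
    using laguerre_coeff_recD[OF rec, of "Suc (2*m)" r] rows by simp
  moreover have "(2 * of_nat r - of_nat (2*m) :: complex) \<noteq> 0"
    using \<open>r \<noteq> m\<close> by simp
  ultimately show ?thesis by simp
qed

lemma laguerre_coeff_rec_diagonal_eq_0:
  assumes rec: "laguerre_coeff_rec \<alpha> 0 A" and rows: "\<And>j r. 2*m < j \<Longrightarrow> A j r = 0" and "m < j"
  shows "A j j = 0"
  using \<open>m < j\<close>
proof (induction j rule: nat_descend_induct[where n = "2*m"])
  case (base T)
  then show ?case using rows by blast
next
  case (descend T)
  have "A T T = (-1)^T * A (2*T) T"
    by (rule laguerre_coeff_rec_diagonal_from_top[OF rec]) (use descend in auto)
  then show ?case using rows[of "2*T" T] descend.prems by simp
qed

lemma hermite_commutator_coeff_rec: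
  assumes "\<And>j. hermite_commutator_coeff c c' f j = 0"
  shows "hermite_coeff_rec (2*(c'-c)) (\<lambda>j r. coeff (f j \<circ>\<^sub>p [:c',1:]) r)"
  unfolding hermite_coeff_rec_def
proof (intro allI)
  fix j r
  define g where "g j = f j \<circ>\<^sub>p [:c',1:]" for j
  have shift: "[:2*c', -2:] \<circ>\<^sub>p [:c',1:] = [:0, -2:]" "pderiv p \<circ>\<^sub>p [:c',1:] = pderiv (p \<circ>\<^sub>p [:c',1:])"
    for p :: "complex poly"
    by (simp_all add: pcompose_pCons pderiv_pcompose pderiv_pCons algebra_simps)
  have "hermite_commutator_coeff c c' f j \<circ>\<^sub>p [:c',1:] = 0" using assms by simp
  then have "pderiv (pderiv (g j)) + [:0,-2:] * pderiv (g j) + smult (2 * of_nat j) (g j)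
     + (if j = 0 then 0 else smult 2 (pderiv (g (j-1))) + smult (2*(c'-c)) (g (j-1))) = 0"
    unfolding hermite_commutator_coeff_def g_def
    by (cases "j = 0") (simp_all only: pcompose_add pcompose_smult pcompose_mult pcompose_0 shift
        if_True if_False simp_thms)
  then have "coeff (pderiv (pderiv (g j)) + [:0,-2:] * pderiv (g j) + smult (2 * of_nat j) (g j)
     + (if j = 0 then 0 else smult 2 (pderiv (g (j-1))) + smult (2*(c'-c)) (g (j-1)))) r = 0"
    by simp
  then show "of_nat ((r+1)*(r+2)) * coeff (g j) (r+2) + 2 * (of_nat j - of_nat r) * coeff (g j) r
      + (if j = 0 then 0 else 2 * of_nat (r+1) * coeff (g (j-1)) (r+1) + 2*(c'-c) * coeff (g (j-1)) r) = 0"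
    by (cases r) (auto simp: coeff_linear_mult coeff_pderiv algebra_simps split: if_splits)
qed

lemma laguerre_commutator_coeff_rec:
  assumes "\<And>j. laguerre_commutator_coeff \<alpha> \<alpha>' f j = 0"
  shows "laguerre_coeff_rec \<alpha>' (\<alpha>'-\<alpha>) (\<lambda>j r. coeff (f j) r)"
  unfolding laguerre_coeff_rec_def
proof (intro allI)
  fix j r
  have "coeff (laguerre_commutator_coeff \<alpha> \<alpha>' f j) r = 0" using assms by simp
  then show "(of_nat r + \<alpha>' + 1) * of_nat (r+1) * coeff (f j) (r+1) + (of_nat j - of_nat r) * coeff (f j) r
      + (if j = 0 then 0 else (2 * of_nat r + (\<alpha>'-\<alpha>) - of_nat (j-1)) * coeff (f (j-1)) r) = 0"
    unfolding laguerre_commutator_coeff_def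
    by (cases r) (auto simp: coeff_linear_mult coeff_pderiv algebra_simps split: if_splits)
qed

lemma coeff_eq_0_above_max_degree:
  fixes g :: "nat \<Rightarrow> 'a::zero poly"
  assumes "\<And>j. M < j \<Longrightarrow> g j = 0"
  obtains R where "\<And>j r. R < r \<Longrightarrow> coeff (g j) r = 0"
proof
  fix j r assume r: "Max (degree ` g ` {..M}) < r"
  show "coeff (g j) r = 0"
  proof (cases "j \<le> M")
    case True
    then have "degree (g j) \<le> Max (degree ` g ` {..M})" by (intro Max_ge) auto
    then show ?thesis using r by (intro coeff_eq_0) (rule le_less_trans)
  next
    case False
    then show ?thesis using assms by simp
  qed
qed

lemma coeff_pcompose_translate_top:
  fixes p :: "'a::idom poly"
  assumes "degree p \<le> n"
  shows "coeff (p \<circ>\<^sub>p [:c,1:]) n = coeff p n"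
proof (cases "degree p = n")
  case True
  then show ?thesis using lead_coeff_comp[of "[:c,1:]" p] by (simp add: degree_pcompose)
next
  case False
  then show ?thesis using assms by (simp add: coeff_eq_0 degree_pcompose)
qed

text \<open>In the Hermite case the diagonal analysis is done after the translation
  \<open>x \<mapsto> x + c\<close>, which turns \<open>2c - 2x\<close> into \<open>-2x\<close>.\<close>
lemma hermite_intertwiner_diagonal:
  fixes f :: "nat \<Rightarrow> complex poly"
  assumes f_zero: "\<And>j. 2*m < j \<Longrightarrow> f j = 0" and comm: "\<And>j. hermite_commutator_coeff c c f j = 0"
  shows "f (2*m) = [:coeff (f (2*m)) 0:]"
    and "\<And>j. m < j \<Longrightarrow> degree (f j) < j"
    and "degree (f m) \<le> m"
    and "coeff (f m) m = (-2)^m * coeff (f (2*m)) 0"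
proof -
  define g where "g j = f j \<circ>\<^sub>p [:c,1:]" for j
  define A where "A j r = coeff (g j) r" for j r
  have degree_g: "degree (g j) = degree (f j)" for j by (simp add: g_def degree_pcompose)
  have rec: "hermite_coeff_rec 0 A"
    using hermite_commutator_coeff_rec[of c c f, OF comm] unfolding A_def g_def by simp
  have rows: "\<And>j r. 2*m < j \<Longrightarrow> A j r = 0" by (simp add: A_def g_def f_zero)
  obtain R where R: "\<And>j r. R < r \<Longrightarrow> A j r = 0"
    using coeff_eq_0_above_max_degree[of "2*m" g] f_zero unfolding A_def g_def by fastforce
  have degree_f: "degree (f j) \<le> j" for j
    unfolding degree_g[symmetric]
    by (rule degree_le) (use hermite_coeff_rec_above_diagonal[OF rec R] in \<open>auto simp: A_def\<close>)
  have "degree (g (2*m)) \<le> 0"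
    by (rule degree_le) (use hermite_coeff_rec_top_row[OF rec rows] in \<open>auto simp: A_def\<close>)
  then show top: "f (2*m) = [:coeff (f (2*m)) 0:]"
    using degree_g by (metis degree_0_id le_zero_eq)
  show "degree (f j) < j" if "m < j" for j
    unfolding degree_g[symmetric]
    by (rule degree_lessI)
       (use that hermite_coeff_rec_diagonal_eq_0[OF rec rows that]
          hermite_coeff_rec_above_diagonal[OF rec R] in \<open>auto simp: A_def le_less\<close>)
  show "degree (f m) \<le> m" by (rule degree_f)
  have "coeff (g m) m = coeff (f m) m"
    by (simp add: g_def coeff_pcompose_translate_top degree_f)
  moreover have "coeff (g (2*m)) 0 = coeff (f (2*m)) 0"
    unfolding g_def by (subst top) simp
  ultimately show "coeff (f m) m = (-2)^m * coeff (f (2*m)) 0"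
    using hermite_coeff_rec_diagonal_from_top[OF rec hermite_coeff_rec_diagonal_eq_0[OF rec rows]]
    by (simp add: A_def)
qed

lemma hermite_intertwiner_eq_0:
  fixes f :: "nat \<Rightarrow> complex poly"
  assumes f_zero: "\<And>j. M < j \<Longrightarrow> f j = 0" and comm: "\<And>j. hermite_commutator_coeff c c' f j = 0"
    and "c \<noteq> c'"
  shows "f j = 0"
proof -
  define g where "g j = f j \<circ>\<^sub>p [:c',1:]" for j
  define A where "A j r = coeff (g j) r" for j r
  have rec: "hermite_coeff_rec (2*(c'-c)) A"
    using hermite_commutator_coeff_rec[of c c' f, OF comm] unfolding A_def g_def by simp
  have rows: "\<And>j r. M < j \<Longrightarrow> A j r = 0" by (simp add: A_def g_def f_zero)
  obtain R where R: "\<And>j r. R < r \<Longrightarrow> A j r = 0"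
    using coeff_eq_0_above_max_degree[of M g] f_zero unfolding A_def g_def by fastforce
  have "A j r = 0" for r
    by (rule hermite_coeff_rec_eq_0[OF rec _ R rows]) (use \<open>c \<noteq> c'\<close> in simp)
  then have "g j = 0" by (intro poly_eqI) (simp add: A_def)
  then show ?thesis by (simp add: g_def pcompose_eq_0_iff)
qed

lemma laguerre_intertwiner_diagonal:
  fixes f :: "nat \<Rightarrow> complex poly"
  assumes f_zero: "\<And>j. 2*m < j \<Longrightarrow> f j = 0" and comm: "\<And>j. laguerre_commutator_coeff \<alpha> \<alpha> f j = 0"
  shows "f (2*m) = monom (coeff (f (2*m)) m) m"
    and "\<And>j. m < j \<Longrightarrow> degree (f j) < j"
    and "degree (f m) \<le> m"
    and "coeff (f m) m = (-1)^m * coeff (f (2*m)) m"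
proof -
  define A where "A j r = coeff (f j) r" for j r
  have rec: "laguerre_coeff_rec \<alpha> 0 A"
    using laguerre_commutator_coeff_rec[of \<alpha> \<alpha> f, OF comm] unfolding A_def by simp
  have rows: "\<And>j r. 2*m < j \<Longrightarrow> A j r = 0" by (simp add: A_def f_zero)
  obtain R where R: "\<And>j r. R < r \<Longrightarrow> A j r = 0"
    using coeff_eq_0_above_max_degree[of "2*m" f] f_zero unfolding A_def by fastforce
  have degree_f: "degree (f j) \<le> j" for j
    by (rule degree_le) (use laguerre_coeff_rec_above_diagonal[OF rec R] in \<open>auto simp: A_def\<close>)
  show "f (2*m) = monom (coeff (f (2*m)) m) m"
    by (rule poly_eqI) (use laguerre_coeff_rec_top_row[OF rec rows] in \<open>auto simp: A_def coeff_monom\<close>)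
  show "degree (f j) < j" if "m < j" for j
    by (rule degree_lessI)
       (use that laguerre_coeff_rec_diagonal_eq_0[OF rec rows that]
          laguerre_coeff_rec_above_diagonal[OF rec R] in \<open>auto simp: A_def le_less\<close>)
  show "degree (f m) \<le> m" by (rule degree_f)
  show "coeff (f m) m = (-1)^m * coeff (f (2*m)) m"
    using laguerre_coeff_rec_diagonal_from_top[OF rec laguerre_coeff_rec_diagonal_eq_0[OF rec rows]]
    by (simp add: A_def)
qed

lemma laguerre_intertwiner_eq_0:
  fixes f :: "nat \<Rightarrow> complex poly"
  assumes f_zero: "\<And>j. M < j \<Longrightarrow> f j = 0" and comm: "\<And>j. laguerre_commutator_coeff \<alpha> \<alpha>' f j = 0"
    and "\<alpha>' - \<alpha> \<notin> \<int>"
  shows "f j = 0"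
proof -
  define A where "A j r = coeff (f j) r" for j r
  have rec: "laguerre_coeff_rec \<alpha>' (\<alpha>'-\<alpha>) A"
    using laguerre_commutator_coeff_rec[of \<alpha> \<alpha>' f, OF comm] unfolding A_def by simp
  have rows: "\<And>j r. M < j \<Longrightarrow> A j r = 0" by (simp add: A_def f_zero)
  obtain R where R: "\<And>j r. R < r \<Longrightarrow> A j r = 0"
    using coeff_eq_0_above_max_degree[of M f] f_zero unfolding A_def by fastforce
  have "A j r = 0" for r by (rule laguerre_coeff_rec_eq_0[OF rec \<open>\<alpha>' - \<alpha> \<notin> \<int>\<close> R rows])
  then show ?thesis by (intro poly_eqI) (simp add: A_def)
qed

section \<open>Orthogonal polynomials for diagonal weights\<close>

abbreviation cnj_poly :: "complex poly \<Rightarrow> complex poly" where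
  "cnj_poly \<equiv> map_poly cnj"

lemma coeff_cnj_poly [simp]: "coeff (cnj_poly p) n = cnj (coeff p n)"
  by (simp add: coeff_map_poly)

lemma cnj_poly_add: "cnj_poly (p + q) = cnj_poly p + cnj_poly q"
  by (rule poly_eqI) simp

lemma cnj_poly_smult: "cnj_poly (smult c p) = smult (cnj c) (cnj_poly p)"
  by (rule poly_eqI) simp

lemma cnj_poly_sum: "cnj_poly (sum g A) = (\<Sum>x\<in>A. cnj_poly (g x))"
  by (induction A rule: infinite_finite_induct) (simp_all add: cnj_poly_add)

lemma cnj_poly_mult: "cnj_poly (p * q) = cnj_poly p * cnj_poly q"
  by (rule poly_eqI) (simp add: coeff_mult)

lemma cnj_poly_pderiv: "cnj_poly (pderiv p) = pderiv (cnj_poly p)"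
  by (rule poly_eqI) (simp add: coeff_pderiv)

lemma cnj_poly_pCons: "cnj_poly (pCons a p) = pCons (cnj a) (cnj_poly p)"
  by (rule poly_eqI) (simp add: coeff_pCons split: nat.split)

locale poly_functional =
  fixes \<phi> :: "complex poly \<Rightarrow> complex"
  assumes add: "\<phi> (p + q) = \<phi> p + \<phi> q"
    and smult: "\<phi> (smult c p) = c * \<phi> p"
begin

lemma zero [simp]: "\<phi> 0 = 0"
  using smult[of 0 0] by simp

lemma diff: "\<phi> (p - q) = \<phi> p - \<phi> q"
  using add[of "p - q" q] by simp

lemma sum: "\<phi> (sum g A) = (\<Sum>x\<in>A. \<phi> (g x))"
  by (induction A rule: infinite_finite_induct) (simp_all add: add)

lemma linear_comp_eq_0_if_eq_0_on_monoms:
  assumes L_add: "\<And>p q. L (p + q) = L p + L q" and L_smult: "\<And>c p. L (smult c p) = smult c (L p)"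
    and monoms: "\<And>j. \<phi> (L (monom 1 j)) = 0"
  shows "\<phi> (L r) = 0"
proof -
  have L_sum: "L (sum g A) = (\<Sum>x\<in>A. L (g x))" for g :: "nat \<Rightarrow> complex poly" and A
    by (induction A rule: infinite_finite_induct) (simp_all add: L_add L_smult[of 0 0, simplified])
  have "L r = L (\<Sum>i\<le>degree r. smult (coeff r i) (monom 1 i))"
    by (simp add: smult_monom poly_as_sum_of_monoms)
  also have "\<dots> = (\<Sum>i\<le>degree r. smult (coeff r i) (L (monom 1 i)))"
    by (simp add: L_sum L_smult)
  finally show ?thesis by (simp add: sum smult monoms)
qed

end

text \<open>The hypothesis \<open>ibp\<close> is \<open>\<integral> (r w)' = 0\<close>, that is, integration by parts against the weight.\<close>
lemma hermite_op_symmetric: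
  assumes "poly_functional \<phi>" and ibp: "\<And>r. \<phi> (pderiv r + [:2*c, -2:] * r) = 0" and "cnj c = c"
  shows "\<phi> (hermite_op c p * cnj_poly q) = \<phi> (p * cnj_poly (hermite_op c q))"
proof -
  define s where "s = pderiv p * cnj_poly q - p * pderiv (cnj_poly q)"
  have "pderiv s + [:2*c, -2:] * s = hermite_op c p * cnj_poly q - p * hermite_op c (cnj_poly q)"
    unfolding s_def hermite_op_def
    by (simp add: pderiv_diff pderiv_mult algebra_simps del: mult_pCons_left mult_pCons_right)
  moreover have "cnj_poly (hermite_op c q) = hermite_op c (cnj_poly q)"
    using \<open>cnj c = c\<close> by (simp add: hermite_op_def cnj_poly_add cnj_poly_mult cnj_poly_pderiv cnj_poly_pCons
        del: mult_pCons_left mult_pCons_right)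
  ultimately show ?thesis using ibp[of s] poly_functional.diff[OF assms(1)] by simp
qed

lemma laguerre_op_symmetric:
  assumes "poly_functional \<phi>" and ibp: "\<And>r. \<phi> ([:\<alpha>+1, -1:] * r + [:0, 1:] * pderiv r) = 0" and "cnj \<alpha> = \<alpha>"
  shows "\<phi> (laguerre_op \<alpha> p * cnj_poly q) = \<phi> (p * cnj_poly (laguerre_op \<alpha> q))"
proof -
  define s where "s = pderiv p * cnj_poly q - p * pderiv (cnj_poly q)"
  have "[:\<alpha>+1, -1:] * s + [:0, 1:] * pderiv s = laguerre_op \<alpha> p * cnj_poly q - p * laguerre_op \<alpha> (cnj_poly q)"
    unfolding s_def laguerre_op_def
    by (simp add: pderiv_diff pderiv_mult algebra_simps del: mult_pCons_left mult_pCons_right)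
  moreover have "cnj_poly (laguerre_op \<alpha> q) = laguerre_op \<alpha> (cnj_poly q)"
    using \<open>cnj \<alpha> = \<alpha>\<close> by (simp add: laguerre_op_def cnj_poly_add cnj_poly_mult cnj_poly_pderiv cnj_poly_pCons
        del: mult_pCons_left mult_pCons_right)
  ultimately show ?thesis using ibp[of s] poly_functional.diff[OF assms(1)] by simp
qed

text \<open>The inner product of a diagonal weight \<open>diag(w\<^sub>k)\<close> is described by one scalar functional
  \<open>\<Phi> k\<close> per diagonal entry.\<close>
locale diagonal_weight_OPS =
  fixes \<Phi> :: "'n::finite \<Rightarrow> complex poly \<Rightarrow> complex" and P :: "nat \<Rightarrow> 'n mpoly"
  assumes functional: "\<And>k. poly_functional (\<Phi> k)"
    and definite: "\<And>k r. \<Phi> k (r * cnj_poly r) = 0 \<Longrightarrow> r = 0"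
    and monic: "\<And>n. monic_mpoly n (P n)"
    and orthogonal: "\<And>n l i j. l \<noteq> n \<Longrightarrow> (\<Sum>k\<in>UNIV. \<Phi> k (P n $ i $ k * cnj_poly (P l $ j $ k))) = 0"
begin

lemma degree_entry: "degree (P n $ i $ k) \<le> n"
  using monic[of n] by (simp add: monic_mpoly_def)

lemma coeff_entry_top: "coeff (P n $ i $ k) n = (if i = k then 1 else 0)"
  using monic[of n] by (simp add: monic_mpoly_def)

lemma orthogonal_lower_degree:
  assumes "\<And>k r. n \<le> r \<Longrightarrow> coeff (v k) r = 0"
  shows "(\<Sum>k\<in>UNIV. \<Phi> k (P n $ i $ k * cnj_poly (v k))) = 0"
proof -
  define \<psi> where "\<psi> v = (\<Sum>k\<in>UNIV. \<Phi> k (P n $ i $ k * cnj_poly (v k)))" for v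
  have \<psi>_add: "\<psi> (\<lambda>k. v k + w k) = \<psi> v + \<psi> w" for v w
    by (simp add: \<psi>_def cnj_poly_add distrib_left poly_functional.add[OF functional] sum.distrib)
  have \<psi>_comb: "\<psi> (\<lambda>k. \<Sum>j\<in>UNIV. smult (c j) (u j k)) = (\<Sum>j\<in>UNIV. cnj (c j) * \<psi> (u j))" for c u
    unfolding \<psi>_def
    by (simp add: cnj_poly_sum cnj_poly_smult sum_distrib_left poly_functional.sum[OF functional]
         poly_functional.smult[OF functional]) (rule sum.swap)
  have "\<forall>v. (\<forall>k r. d \<le> r \<longrightarrow> coeff (v k) r = 0) \<longrightarrow> \<psi> v = 0" if "d \<le> n" for d
    using that
  proof (induction d)
    case 0
    show ?case
    proof (intro allI impI)
      fix v :: "'n \<Rightarrow> complex poly" assume "\<forall>k r. 0 \<le> r \<longrightarrow> coeff (v k) r = 0"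
      then have "v = (\<lambda>k. 0)" by (simp add: fun_eq_iff poly_eq_iff)
      then show "\<psi> v = 0" by (simp add: \<psi>_def poly_functional.zero[OF functional])
    qed
  next
    case (Suc d)
    show ?case
    proof (intro allI impI)
      fix v :: "'n \<Rightarrow> complex poly" assume v: "\<forall>k r. Suc d \<le> r \<longrightarrow> coeff (v k) r = 0"
      define c where "c j = coeff (v j) d" for j
      define v' where "v' k = v k - (\<Sum>j\<in>UNIV. smult (c j) (P d $ j $ k))" for k
      have "coeff (v' k) r = 0" if "d \<le> r" for k r
      proof (cases "r = d")
        case True
        then show ?thesis
          by (simp add: v'_def coeff_sum c_def coeff_entry_top if_distrib cong: if_cong)
      next
        case False
        with that have "d < r" by simp
        then show ?thesis
          using v by (simp add: v'_def coeff_sum coeff_eq_0[OF le_less_trans[OF degree_entry]])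
      qed
      then have "\<psi> v' = 0" using Suc by simp
      moreover have "\<psi> (\<lambda>k. P d $ j $ k) = 0" for j
        unfolding \<psi>_def using orthogonal[of d n] Suc.prems by simp
      moreover have "v = (\<lambda>k. v' k + (\<Sum>j\<in>UNIV. smult (c j) (P d $ j $ k)))"
        by (simp add: v'_def)
      ultimately show "\<psi> v = 0" by (simp add: \<psi>_add \<psi>_comb)
    qed
  qed
  from this[OF order_refl] show ?thesis using assms unfolding \<psi>_def by blast
qed

lemma entry_orthogonal_lower_degree:
  assumes "\<And>r. n \<le> r \<Longrightarrow> coeff q r = 0"
  shows "\<Phi> k (P n $ i $ k * cnj_poly q) = 0"
proof -
  define v where "v k' = (if k' = k then q else 0)" for k'
  have "(\<Sum>k'\<in>UNIV. \<Phi> k' (P n $ i $ k' * cnj_poly (v k'))) = 0"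
    by (rule orthogonal_lower_degree) (auto simp: v_def assms)
  moreover have "(\<Sum>k'\<in>UNIV. \<Phi> k' (P n $ i $ k' * cnj_poly (v k'))) = \<Phi> k (P n $ i $ k * cnj_poly q)"
    by (subst sum.remove[of UNIV k]) (auto simp: v_def poly_functional.zero[OF functional] intro!: sum.neutral)
  ultimately show ?thesis by simp
qed

lemma off_diagonal_eq_0:
  assumes "i \<noteq> k"
  shows "P n $ i $ k = 0"
proof (rule definite)
  show "\<Phi> k (P n $ i $ k * cnj_poly (P n $ i $ k)) = 0"
    by (rule entry_orthogonal_lower_degree)
       (use assms degree_entry[of n i k] coeff_entry_top[of n i k] in \<open>auto simp: coeff_eq_0 le_less\<close>)
qed

lemma coeff_diagonal_entry_top: "coeff (P n $ i $ i) n = 1"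
  by (simp add: coeff_entry_top)

lemma degree_diagonal_entry: "degree (P n $ i $ i) = n"
  using degree_entry[of n i i] coeff_entry_top[of n i i] by (metis le_antisym le_degree one_neq_zero)

text \<open>\<open>T p - \<mu> n p\<close> has degree below \<open>n\<close> and, by symmetry of \<open>T\<close>, is orthogonal to
  itself.\<close>
lemma diagonal_entry_eigen:
  assumes symmetric: "\<And>p q. \<Phi> i (T p * cnj_poly q) = \<Phi> i (p * cnj_poly (T q))"
    and degree_T: "\<And>p. degree (T p) \<le> degree p"
    and top_T: "\<And>p n. degree p \<le> n \<Longrightarrow> coeff (T p) n = \<mu> n * coeff p n"
    and diff_T: "\<And>p q. T (p - q) = T p - T q" and smult_T: "\<And>c p. T (smult c p) = smult c (T p)"
  shows "T (P n $ i $ i) = smult (\<mu> n) (P n $ i $ i)"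
proof -
  define p where "p = P n $ i $ i"
  define e where "e = T p - smult (\<mu> n) p"
  have "degree e \<le> n"
    unfolding e_def by (rule degree_diff_le) (use degree_T[of p] degree_entry[of n i i] in \<open>auto simp: p_def intro: order_trans\<close>)
  moreover have "coeff e n = 0"
    using top_T[OF degree_entry] by (simp add: e_def p_def coeff_entry_top)
  ultimately have e_low: "\<And>r. n \<le> r \<Longrightarrow> coeff e r = 0"
    by (metis coeff_eq_0 le_neq_implies_less le_less_trans)
  have Te_low: "\<And>r. n \<le> r \<Longrightarrow> coeff (T e) r = 0"
  proof (cases "e = 0")
    case True
    then show "\<And>r. coeff (T e) r = 0" using smult_T[of 0 0] by simp
  next
    case False
    then have "degree e < n" using e_low by (metis leading_coeff_0_iff linorder_not_le)
    then show "\<And>r. n \<le> r \<Longrightarrow> coeff (T e) r = 0"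
      using degree_T[of e] by (intro coeff_eq_0) simp
  qed
  have "\<Phi> i (e * cnj_poly e) = \<Phi> i (T p * cnj_poly e) - \<mu> n * \<Phi> i (p * cnj_poly e)"
    by (simp add: e_def left_diff_distrib mult_smult_left
        poly_functional.diff[OF functional] poly_functional.smult[OF functional])
  also have "\<Phi> i (p * cnj_poly e) = 0"
    unfolding p_def by (rule entry_orthogonal_lower_degree) (rule e_low)
  also have "\<Phi> i (T p * cnj_poly e) = \<Phi> i (p * cnj_poly (T e))" by (rule symmetric)
  also have "\<dots> = 0"
    unfolding p_def by (rule entry_orthogonal_lower_degree) (rule Te_low)
  finally have "e = 0" using definite by simp
  then show ?thesis by (simp add: e_def p_def)
qed

end

section \<open>Moment functionals of the Hermite and Laguerre weights\<close>

definition moment :: "real set \<Rightarrow> (real \<Rightarrow> real) \<Rightarrow> nat \<Rightarrow> real" where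
  "moment S w j = (LINT x|lborel. indicator S x * (x^j * w x))"

text \<open>Defined through the moments, the functional is linear without integrability side
  conditions; \<open>has_bochner_integral_poly_mult_weight\<close> identifies it with \<open>r \<mapsto> \<integral>\<^sub>S r w\<close>.\<close>

definition moment_functional :: "real set \<Rightarrow> (real \<Rightarrow> real) \<Rightarrow> complex poly \<Rightarrow> complex" where
  "moment_functional S w r = (\<Sum>j\<le>degree r. coeff r j * of_real (moment S w j))"

lemma moment_functional_altdef:
  "degree r \<le> N \<Longrightarrow> moment_functional S w r = (\<Sum>j\<le>N. coeff r j * of_real (moment S w j))"
  unfolding moment_functional_def by (rule sum.mono_neutral_left) (auto simp: coeff_eq_0)

lemma poly_functional_moment_functional: "poly_functional (moment_functional S w)"
proof
  fix p q :: "complex poly"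
  define N where "N = max (degree p) (degree q)"
  have "degree (p + q) \<le> N" unfolding N_def by (rule degree_add_le) auto
  then show "moment_functional S w (p + q) = moment_functional S w p + moment_functional S w q"
    by (simp add: moment_functional_altdef[of _ N] N_def distrib_right sum.distrib)
next
  fix c and p :: "complex poly"
  show "moment_functional S w (smult c p) = c * moment_functional S w p"
    by (simp add: moment_functional_altdef[of _ "degree p"] sum_distrib_left mult.assoc)
qed

lemmas moment_functional_add = poly_functional.add[OF poly_functional_moment_functional]
  and moment_functional_diff = poly_functional.diff[OF poly_functional_moment_functional]
  and moment_functional_linear_comp_eq_0 =
    poly_functional.linear_comp_eq_0_if_eq_0_on_monoms[OF poly_functional_moment_functional]

lemma moment_functional_monom: "moment_functional S w (monom c j) = c * of_real (moment S w j)"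
proof -
  have "(if P then c else 0) * x = (if P then c * x else 0)" for P and x :: complex
    by simp
  then show ?thesis by (simp add: moment_functional_altdef[of _ j] degree_monom_le coeff_monom)
qed

lemma linear_mult_monom: "[:u, v:] * monom 1 j = monom u j + monom (v::complex) (Suc j)"
  by (rule poly_eqI) (auto simp: coeff_linear_mult coeff_monom simp del: mult_pCons_left mult_pCons_right)

lemma moment_functional_hermite_ibp:
  assumes moments: "\<And>j. of_nat j * moment S w (j-1) + 2 * b * moment S w j - 2 * moment S w (Suc j) = 0"
  shows "moment_functional S w (pderiv r + [:2 * complex_of_real b, -2:] * r) = 0"
proof (rule moment_functional_linear_comp_eq_0
    [where L = "\<lambda>r. pderiv r + [:2 * complex_of_real b, -2:] * r"])
  fix j
  have "moment_functional S w (pderiv (monom 1 j) + [:2 * complex_of_real b, -2:] * monom 1 j) =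
    of_nat j * of_real (moment S w (j-1)) + 2 * of_real b * of_real (moment S w j)
      - 2 * of_real (moment S w (Suc j))"
    using moment_functional_add moment_functional_diff
    by (simp add: pderiv_monom linear_mult_monom moment_functional_monom
        del: mult_pCons_left mult_pCons_right)
  also have "\<dots> = of_real (of_nat j * moment S w (j-1) + 2 * b * moment S w j - 2 * moment S w (Suc j))"
    by simp
  also have "\<dots> = 0" by (simp only: moments of_real_0)
  finally show "moment_functional S w (pderiv (monom 1 j) + [:2 * complex_of_real b, -2:] * monom 1 j) = 0" .
qed (simp_all add: pderiv_add pderiv_smult smult_add_right algebra_simps del: mult_pCons_left mult_pCons_right)

lemma moment_functional_laguerre_ibp:
  assumes moments: "\<And>j. (a + of_nat j + 1) * moment S w j - moment S w (Suc j) = 0"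
  shows "moment_functional S w ([:complex_of_real a + 1, -1:] * r + [:0, 1:] * pderiv r) = 0"
proof (rule moment_functional_linear_comp_eq_0
    [where L = "\<lambda>r. [:complex_of_real a + 1, -1:] * r + [:0, 1:] * pderiv r"])
  fix j
  have "[:0, 1:] * pderiv (monom (1::complex) j) = monom (of_nat j) j"
    by (rule poly_eqI) (auto simp: coeff_linear_mult coeff_monom coeff_pderiv
        simp del: mult_pCons_left mult_pCons_right)
  then have "moment_functional S w ([:complex_of_real a + 1, -1:] * monom 1 j + [:0, 1:] * pderiv (monom 1 j)) =
    (of_real a + 1) * of_real (moment S w j) - of_real (moment S w (Suc j)) + of_nat j * of_real (moment S w j)"
    using moment_functional_add moment_functional_diff
    by (simp add: linear_mult_monom moment_functional_monom del: mult_pCons_left mult_pCons_right)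
  also have "\<dots> = of_real ((a + of_nat j + 1) * moment S w j - moment S w (Suc j))"
    by (simp add: algebra_simps)
  also have "\<dots> = 0" by (simp only: moments of_real_0)
  finally show "moment_functional S w ([:complex_of_real a + 1, -1:] * monom 1 j + [:0, 1:] * pderiv (monom 1 j)) = 0" .
qed (simp_all add: pderiv_add pderiv_smult smult_add_right algebra_simps del: mult_pCons_left mult_pCons_right)

lemma has_bochner_integral_poly_mult_weight:
  assumes "\<And>j. integrable lborel (\<lambda>x. indicator S x * (x^j * w x))"
  shows "has_bochner_integral lborel
    (\<lambda>x. indicator S x *\<^sub>R (poly r (of_real x) * of_real (w x))) (moment_functional S w r)"
proof -
  have "indicator S x *\<^sub>R (poly r (of_real x) * of_real (w x)) =
      (\<Sum>j\<le>degree r. coeff r j * of_real (indicator S x * (x^j * w x)))" for x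
    by (simp add: poly_altdef sum_distrib_left sum_distrib_right scaleR_conv_of_real algebra_simps)
  moreover have "has_bochner_integral lborel
      (\<lambda>x. \<Sum>j\<le>degree r. coeff r j * of_real (indicator S x * (x^j * w x))) (moment_functional S w r)"
    unfolding moment_functional_def moment_def
    by (intro has_bochner_integral_sum has_bochner_integral_mult_right has_bochner_integral_of_real
        has_bochner_integral_integrable assms)
  ultimately show ?thesis by simp
qed

lemma mip_eq_moment_functional:
  fixes Q R :: "'n::finite mpoly"
  assumes "\<And>k j. integrable lborel (\<lambda>x. indicator S x * (x^j * w k x))"
  shows "mip S w Q R $ i $ j = (\<Sum>k\<in>UNIV. moment_functional S (w k) (Q $ i $ k * cnj_poly (R $ j $ k)))"
proof -
  have "indicator S x *\<^sub>R (\<Sum>k\<in>UNIV. poly (Q$i$k) (of_real x) * of_real (w k x) * cnj (poly (R$j$k) (of_real x))) =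
      (\<Sum>k\<in>UNIV. indicator S x *\<^sub>R (poly (Q $ i $ k * cnj_poly (R $ j $ k)) (of_real x) * of_real (w k x)))"
    for x
    by (simp add: scaleR_sum_right mult_ac)
  moreover have "has_bochner_integral lborel
      (\<lambda>x. \<Sum>k\<in>UNIV. indicator S x *\<^sub>R (poly (Q $ i $ k * cnj_poly (R $ j $ k)) (of_real x) * of_real (w k x)))
      (\<Sum>k\<in>UNIV. moment_functional S (w k) (Q $ i $ k * cnj_poly (R $ j $ k)))"
    by (intro has_bochner_integral_sum has_bochner_integral_poly_mult_weight assms)
  ultimately show ?thesis
    by (simp add: mip_def set_lebesgue_integral_def has_bochner_integral_integral_eq)
qed

lemma moment_functional_definite:
  assumes integrable: "\<And>j. integrable lborel (\<lambda>x. indicator S x * (x^j * w x))"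
    and pos: "\<And>x. x \<in> S \<Longrightarrow> 0 < w x" and "S \<in> sets lborel" "emeasure lborel S \<noteq> 0"
    and "moment_functional S w (r * cnj_poly r) = 0"
  shows "r = 0"
proof (rule ccontr)
  assume "r \<noteq> 0"
  define g where "g x = indicator S x * ((cmod (poly r (of_real x)))\<^sup>2 * w x)" for x
  have "indicator S x *\<^sub>R (poly (r * cnj_poly r) (of_real x) * of_real (w x)) = of_real (g x)" for x
  proof -
    have "poly (r * cnj_poly r) (of_real x) = of_real ((cmod (poly r (of_real x)))\<^sup>2)"
      by (simp only: poly_mult poly_map_poly_cnj complex_cnj_complex_of_real complex_norm_square)
    then show ?thesis by (simp add: g_def scaleR_conv_of_real)
  qed
  then have "has_bochner_integral lborel (\<lambda>x. complex_of_real (g x)) 0"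
    using has_bochner_integral_poly_mult_weight[OF integrable, of "r * cnj_poly r"] assms(5) by simp
  then have "integrable lborel g" "(LINT x|lborel. g x) = 0"
    by (auto simp: has_bochner_integral_iff complex_of_real_integrable_eq)
  moreover have "AE x in lborel. 0 \<le> g x" using pos by (auto simp: g_def indicator_def less_imp_le)
  ultimately have g_zero: "AE x in lborel. g x = 0" using integral_nonneg_eq_0_iff_AE by blast
  have "finite {x::real. poly r (of_real x) = 0}"
    using finite_vimageI[OF poly_roots_finite[OF \<open>r \<noteq> 0\<close>], of complex_of_real]
    by (simp add: inj_on_def vimage_def)
  then have "{x. poly r (of_real x) = 0} \<in> null_sets lborel" by (rule finite_imp_null_set_lborel)
  from AE_not_in[OF this] have "AE x in lborel. poly r (of_real x) \<noteq> 0" by simp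
  with g_zero have "AE x in lborel. x \<notin> S"
  proof eventually_elim
    case (elim x)
    then show ?case using pos by (fastforce simp: g_def)
  qed
  then show False using AE_iff_measurable[of S] assms(3,4) by auto
qed

lemma hermite_weight_power_tendsto_at_top:
  "((\<lambda>x::real. x^j * exp (- x\<^sup>2 + 2 * b * x)) \<longlongrightarrow> 0) at_top"
proof -
  have "((\<lambda>x::real. x^j / exp x * exp ((1 + 2*b) * x - x\<^sup>2)) \<longlongrightarrow> 0 * 0) at_top"
    by (intro tendsto_mult tendsto_power_div_exp_0) real_asymp
  moreover have "x^j / exp x * exp ((1 + 2*b) * x - x\<^sup>2) = x^j * exp (- x\<^sup>2 + 2 * b * x)" for x :: real
  proof -
    have "exp ((1 + 2*b) * x - x\<^sup>2) = exp x * exp (- x\<^sup>2 + 2 * b * x)"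
      by (simp add: exp_add[symmetric] algebra_simps)
    then show ?thesis by simp
  qed
  ultimately show ?thesis by simp
qed

lemma hermite_weight_power_tendsto_at_bot:
  "((\<lambda>x::real. x^j * exp (- x\<^sup>2 + 2 * b * x)) \<longlongrightarrow> 0) at_bot"
proof -
  have mirror: "(-1)^j * (x^j * exp (- x\<^sup>2 + 2 * (-b) * x)) = (-x)^j * exp (- (-x)\<^sup>2 + 2 * b * (-x))"
    for x :: real
    by (simp add: power_minus[of x j])
  show ?thesis
    unfolding filterlim_at_bot_mirror mirror[symmetric]
    by (intro tendsto_mult_right_zero hermite_weight_power_tendsto_at_top)
qed

lemma integrable_hermite_weight_power: "integrable lborel (\<lambda>x::real. x^j * exp (- x\<^sup>2 + 2 * b * x))"
proof -
  define s where "s = sqrt (1/2::real)"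
  have weight: "exp (- x\<^sup>2 + 2 * b * x) = exp (b\<^sup>2) * sqrt pi * normal_density b s x" for x
  proof -
    have "exp (- x\<^sup>2 + 2 * b * x) = exp (b\<^sup>2) * exp (- (x - b)\<^sup>2)"
      by (simp add: exp_add[symmetric] power2_eq_square algebra_simps)
    then show ?thesis by (simp add: normal_density_def s_def)
  qed
  have binomial: "x^j = (\<Sum>i\<le>j. of_nat (j choose i) * (x - b)^i * b^(j - i))" for x :: real
    using binomial_ring[of "x - b" b j] by simp
  have "x^j * exp (- x\<^sup>2 + 2 * b * x) =
     (\<Sum>i\<le>j. (exp (b\<^sup>2) * sqrt pi * of_nat (j choose i) * b^(j - i)) * (normal_density b s x * (x - b)^i))" for x
    unfolding weight binomial[of x] sum_distrib_right by (rule sum.cong) (simp_all add: algebra_simps)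
  then show ?thesis
    by (simp only:) (intro Bochner_Integration.integrable_sum integrable_mult_right integrable_normal_moment,
        simp add: s_def)
qed

text \<open>Integrate \<open>(x\<^sup>j w)' = j x\<^sup>j\<^sup>-\<^sup>1 w + (2b - 2x) x\<^sup>j w\<close> over the real line.\<close>
lemma hermite_weight_moment_rec:
  "of_nat j * moment UNIV (wH b k) (j-1) + 2 * b k * moment UNIV (wH b k) j
     - 2 * moment UNIV (wH b k) (Suc j) = 0"
proof -
  define w where "w = wH b k"
  define F where "F x = x^j * w x" for x
  define f where "f x = of_nat j * (x^(j-1) * w x) + 2 * b k * (x^j * w x) - 2 * (x^(Suc j) * w x)" for x
  have w: "w = (\<lambda>x. exp (- x\<^sup>2 + 2 * b k * x))" by (simp add: w_def wH_def fun_eq_iff)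
  have integrable: "integrable lborel (\<lambda>x. x^i * w x)" for i
    unfolding w by (rule integrable_hermite_weight_power)
  have "(F has_real_derivative f x) (at x)" for x
    unfolding F_def f_def w
    by (rule derivative_eq_intros refl | simp)+ (cases j, simp_all add: algebra_simps)
  then have derivative: "(F has_vector_derivative f x) (at x)" for x
    by (simp add: has_real_derivative_iff_has_vector_derivative)
  have continuous: "isCont f x" for x
    unfolding f_def w by (intro continuous_intros)
  have "(LBINT x=-\<infinity>..\<infinity>. f x) = 0 - 0"
  proof (rule interval_integral_FTC_integrable[where F = F])
    show "set_integrable lborel (einterval (-\<infinity>) \<infinity>) f"
      unfolding set_integrable_def f_def
      by (simp del: power_Suc, intro Bochner_Integration.integrable_diff Bochner_Integration.integrable_add
          Bochner_Integration.integrable_mult_right integrable)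
    show "((F \<circ> real_of_ereal) \<longlongrightarrow> 0) (at_right (-\<infinity>))"
      unfolding ereal_tendsto_simps1 F_def w by (rule hermite_weight_power_tendsto_at_bot)
    show "((F \<circ> real_of_ereal) \<longlongrightarrow> 0) (at_left \<infinity>)"
      unfolding ereal_tendsto_simps1 F_def w by (rule hermite_weight_power_tendsto_at_top)
  qed (auto intro: derivative continuous)
  moreover have "has_bochner_integral lborel f
      (of_nat j * moment UNIV w (j-1) + 2 * b k * moment UNIV w j - 2 * moment UNIV w (Suc j))"
    unfolding f_def moment_def
    by (intro has_bochner_integral_diff has_bochner_integral_add has_bochner_integral_mult_right)
       (simp_all del: power_Suc add: has_bochner_integral_integrable integrable)
  ultimately show ?thesis
    by (simp add: interval_lebesgue_integral_le_eq set_lebesgue_integral_def w_def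
        has_bochner_integral_integral_eq)
qed

lemma laguerre_weight_power_eq:
  assumes "0 < x"
  shows "x^j * wL a k x = x powr (a k + of_nat j) / exp x"
  using assms by (simp add: wL_def powr_add powr_realpow exp_minus field_simps)

lemma integrable_laguerre_weight_power:
  assumes "-1 < a k"
  shows "integrable lborel (\<lambda>x. indicator {0<..} x * (x^j * wL a k x))"
proof -
  define s where "s = a k + of_nat j + 1"
  define h where "h t = t powr (s - 1) / exp t" for t :: real
  have "(h has_integral Gamma s) {0..}"
    unfolding h_def by (rule Gamma_integral_real) (use assms in \<open>simp add: s_def\<close>)
  then have "h absolutely_integrable_on {0..}"
    by (intro nonnegative_absolutely_integrable_1) (auto simp: h_def)
  moreover have "(\<lambda>x. indicator {0..} x *\<^sub>R h x) \<in> borel_measurable lborel"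
    unfolding h_def by measurable
  ultimately have "integrable lborel (\<lambda>x. indicator {0..} x *\<^sub>R h x)"
    by (simp add: set_integrable_def integrable_completion)
  moreover have "indicator {0..} x *\<^sub>R h x = indicator {0<..} x * (x^j * wL a k x)" for x :: real
    by (cases "0 < x") (auto simp: h_def s_def laguerre_weight_power_eq indicator_def)
  ultimately show ?thesis by simp
qed

text \<open>Integrate \<open>(x\<^sup>s e\<^sup>-\<^sup>x)'\<close>, \<open>s = \<alpha> + j + 1\<close>, over \<open>(0, \<infinity>)\<close>.\<close>
lemma laguerre_weight_moment_rec:
  assumes "-1 < a k"
  shows "(a k + of_nat j + 1) * moment {0<..} (wL a k) j - moment {0<..} (wL a k) (Suc j) = 0"
proof -
  define w where "w = wL a k"
  define s where "s = a k + of_nat j + 1"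
  define F where "F x = x powr s * exp (- x)" for x :: real
  define f where "f x = s * (x^j * w x) - x^(Suc j) * w x" for x :: real
  have s: "0 < s" using assms by (simp add: s_def)
  have integrable: "integrable lborel (\<lambda>x. indicator {0<..} x * (x^i * w x))" for i
    unfolding w_def by (rule integrable_laguerre_weight_power[where a = a and k = k, OF assms])
  have f_restrict: "(\<lambda>x. indicator {0<..} x *\<^sub>R f x) =
      (\<lambda>x. s * (indicator {0<..} x * (x^j * w x)) - indicator {0<..} x * (x^(Suc j) * w x))"
    by (auto simp: f_def indicator_def)
  have derivative: "(F has_vector_derivative f x) (at x)" if "0 < x" for x
  proof -
    have "(F has_real_derivative x powr s * (exp (- x) * (- 1)) + (s * x powr (s - 1)) * exp (- x)) (at x)"
      unfolding F_def using that by (intro DERIV_mult' has_real_derivative_powr) (auto intro!: derivative_eq_intros)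
    moreover have "x powr s * (exp (- x) * (- 1)) + (s * x powr (s - 1)) * exp (- x) = f x"
      using that by (simp add: f_def w_def wL_def s_def powr_add powr_realpow algebra_simps)
    ultimately show ?thesis by (simp add: has_real_derivative_iff_has_vector_derivative)
  qed
  have continuous: "isCont f x" if "0 < x" for x
    unfolding f_def w_def wL_def using that by (intro continuous_intros) auto
  have "(LBINT x=0..\<infinity>. f x) = 0 - 0"
  proof (rule interval_integral_FTC_integrable[where F = F])
    show "set_integrable lborel (einterval 0 \<infinity>) f"
      unfolding set_integrable_def zero_ereal_def einterval_eq f_restrict
      by (intro Bochner_Integration.integrable_diff Bochner_Integration.integrable_mult_right integrable)
    show "((F \<circ> real_of_ereal) \<longlongrightarrow> 0) (at_right 0)"
      unfolding zero_ereal_def ereal_tendsto_simps1 F_def using s by real_asymp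
    show "((F \<circ> real_of_ereal) \<longlongrightarrow> 0) (at_left \<infinity>)"
      unfolding ereal_tendsto_simps1 F_def using s by real_asymp
  qed (auto intro: derivative continuous simp: zero_ereal_def)
  moreover have "has_bochner_integral lborel (\<lambda>x. indicator {0<..} x *\<^sub>R f x)
      (s * moment {0<..} w j - moment {0<..} w (Suc j))"
    unfolding f_restrict moment_def
    by (intro has_bochner_integral_diff has_bochner_integral_mult_right has_bochner_integral_integrable
        integrable)
  ultimately show ?thesis
    by (simp add: interval_lebesgue_integral_0_infty set_lebesgue_integral_def s_def w_def
        has_bochner_integral_integral_eq)
qed

lemma diagonal_weight_OPS_if_monic_OPS:
  assumes OPS: "monic_OPS S w P"
    and integrable: "\<And>k j. integrable lborel (\<lambda>x. indicator S x * (x^j * w k x))"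
    and pos: "\<And>k x. x \<in> S \<Longrightarrow> 0 < w k x" and "S \<in> sets lborel" "emeasure lborel S \<noteq> 0"
  shows "diagonal_weight_OPS (\<lambda>k. moment_functional S (w k)) P"
proof (rule diagonal_weight_OPS.intro)
  show "poly_functional (moment_functional S (w k))" for k
    by (rule poly_functional_moment_functional)
  show "r = 0" if "moment_functional S (w k) (r * cnj_poly r) = 0" for k r
    by (rule moment_functional_definite[OF integrable pos assms(4,5) that])
  show "monic_mpoly n (P n)" for n
    using OPS by (simp add: monic_OPS_def)
  show "(\<Sum>k\<in>UNIV. moment_functional S (w k) (P n $ i $ k * cnj_poly (P l $ j $ k))) = 0"
    if "l \<noteq> n" for n l i j
    using OPS that by (simp add: monic_OPS_def flip: mip_eq_moment_functional[OF integrable])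
qed

lemma hermite_weight_OPS:
  assumes "monic_OPS UNIV (wH b) P"
  shows "diagonal_weight_OPS (\<lambda>k. moment_functional UNIV (wH b k)) P"
proof (rule diagonal_weight_OPS_if_monic_OPS[OF assms])
  show "integrable lborel (\<lambda>x. indicator UNIV x * (x^j * wH b k x))" for k j
    using integrable_hermite_weight_power[of j "b k"] by (simp add: wH_def)
qed (simp_all add: wH_def)

lemma laguerre_weight_OPS:
  assumes "monic_OPS {0<..} (wL a) P" and "\<And>i. -1 < a i"
  shows "diagonal_weight_OPS (\<lambda>k. moment_functional {0<..} (wL a k)) P"
proof (rule diagonal_weight_OPS_if_monic_OPS[OF assms(1) integrable_laguerre_weight_power[where a = a, OF assms(2)]])
  have "emeasure lborel {0<..<1::real} \<le> emeasure lborel {0::real<..}"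
    by (intro emeasure_mono) auto
  then show "emeasure lborel {0::real<..} \<noteq> 0" by auto
qed (simp_all add: wL_def)

lemma hermite_OPS_eigen:
  assumes "monic_OPS UNIV (wH b) P"
  shows "hermite_op (of_real (b i)) (P n $ i $ i) = smult (- 2 * of_nat n) (P n $ i $ i)"
proof (rule diagonal_weight_OPS.diagonal_entry_eigen[OF hermite_weight_OPS[OF assms]])
  show "moment_functional UNIV (wH b i) (hermite_op (of_real (b i)) p * cnj_poly q) =
      moment_functional UNIV (wH b i) (p * cnj_poly (hermite_op (of_real (b i)) q))" for p q
    by (intro hermite_op_symmetric poly_functional_moment_functional moment_functional_hermite_ibp
        hermite_weight_moment_rec) simp
qed (simp_all add: degree_hermite_op_le coeff_hermite_op_top hermite_op_diff hermite_op_smult)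

lemma laguerre_OPS_eigen:
  assumes "monic_OPS {0<..} (wL a) P" and "\<And>i. -1 < a i"
  shows "laguerre_op (of_real (a i)) (P n $ i $ i) = smult (- of_nat n) (P n $ i $ i)"
proof (rule diagonal_weight_OPS.diagonal_entry_eigen[OF laguerre_weight_OPS[OF assms]])
  show "moment_functional {0<..} (wL a i) (laguerre_op (of_real (a i)) p * cnj_poly q) =
      moment_functional {0<..} (wL a i) (p * cnj_poly (laguerre_op (of_real (a i)) q))" for p q
    by (intro laguerre_op_symmetric poly_functional_moment_functional moment_functional_laguerre_ibp
        laguerre_weight_moment_rec assms(2)) simp
qed (simp_all add: degree_laguerre_op_le coeff_laguerre_op_top laguerre_op_diff laguerre_op_smult)

section \<open>Matrix differential operators with diagonal orthogonal polynomials\<close>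

lemma sum_UNIV_eq_single:
  fixes g :: "'n::finite \<Rightarrow> 'a::comm_monoid_add"
  assumes "\<And>l. l \<noteq> i \<Longrightarrow> g l = 0"
  shows "(\<Sum>l\<in>UNIV. g l) = g i"
  by (subst sum.remove[of UNIV i]) (auto simp: assms intro!: sum.neutral)

lemma higher_mat_deriv_entry: "(mat_deriv ^^ j) P $ i $ k = (pderiv ^^ j) (P $ i $ k)"
  by (induction j) (simp_all add: mat_deriv_def)

lemma dop_act_diagonal_entry:
  fixes D :: "'n::finite mpoly"
  assumes diagonal: "\<And>i k. i \<noteq> k \<Longrightarrow> D $ i $ k = 0"
  shows "dop_act F M D $ i $ k = scalar_dop_act (\<lambda>j. F j $ i $ k) M (D $ i $ i)"
proof -
  have "((mat_deriv ^^ j) D ** F j) $ i $ k = (pderiv ^^ j) (D $ i $ i) * F j $ i $ k" for j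
    unfolding matrix_matrix_mult_def vec_lambda_beta higher_mat_deriv_entry
    by (rule sum_UNIV_eq_single) (simp add: diagonal)
  then show ?thesis by (simp add: dop_act_def scalar_dop_act_def sum_component)
qed

lemma const_mpoly_mult_diagonal_entry:
  fixes D :: "'n::finite mpoly"
  assumes diagonal: "\<And>i k. i \<noteq> k \<Longrightarrow> D $ i $ k = 0"
  shows "(const_mpoly L ** D) $ i $ k = smult (L $ i $ k) (D $ k $ k)"
proof -
  have "(const_mpoly L ** D) $ i $ k = [:L $ i $ k:] * D $ k $ k"
    unfolding matrix_matrix_mult_def const_mpoly_def vec_lambda_beta
    by (rule sum_UNIV_eq_single) (simp add: diagonal)
  then show ?thesis by simp
qed

lemma in_DW_diagonal_entries:
  assumes diagonal: "\<And>n i k. i \<noteq> k \<Longrightarrow> P n $ i $ k = 0" and "in_DW P F M"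
  obtains \<Lambda> where "\<And>n i k. scalar_dop_act (\<lambda>j. if j \<le> M then F j $ i $ k else 0) M (P n $ i $ i) =
    smult (\<Lambda> n $ i $ k) (P n $ k $ k)"
proof -
  obtain \<Lambda> where "\<And>n. dop_act F M (P n) = const_mpoly (\<Lambda> n) ** P n"
    using \<open>in_DW P F M\<close> unfolding in_DW_def by metis
  moreover have "scalar_dop_act (\<lambda>j. if j \<le> M then F j $ i $ k else 0) M q =
      scalar_dop_act (\<lambda>j. F j $ i $ k) M q" for i k q
    by (auto simp: scalar_dop_act_def intro!: sum.cong)
  ultimately show ?thesis
    using that dop_act_diagonal_entry[OF diagonal] const_mpoly_mult_diagonal_entry[OF diagonal] by metis
qed

lemma diag_mpoly_shape:
  fixes F :: "nat \<Rightarrow> 'n::finite mpoly" and c :: "'n \<Rightarrow> complex"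
  assumes off_diagonal: "\<And>i k j. i \<noteq> k \<Longrightarrow> j \<le> 2*m \<Longrightarrow> F j $ i $ k = 0"
    and top: "\<And>i. F (2*m) $ i $ i = smult (c i) (\<rho> ^ m)"
    and middle_degree: "\<And>i. degree (F m $ i $ i) \<le> m"
    and middle_coeff: "\<And>i. coeff (F m $ i $ i) m = c i * \<sigma> ^ m"
    and upper: "\<And>i j. m < j \<Longrightarrow> j \<le> 2*m \<Longrightarrow> degree (F j $ i $ i) < j"
  shows "\<exists>c q. (\<forall>i. q i = 0 \<or> degree (q i) < m) \<and>
      F (2*m) = diag_mpoly (\<lambda>i. smult (c i) (\<rho> ^ m)) \<and>
      F m = diag_mpoly (\<lambda>i. smult (c i * \<sigma>^m) (monom 1 m) + q i) \<and>
      (\<forall>j. m + 1 \<le> j \<and> j \<le> 2*m \<longrightarrow> (\<forall>i k. degree (F j $ i $ k) < j))"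
proof -
  define q where "q i = F m $ i $ i - smult (c i * \<sigma>^m) (monom 1 m)" for i
  have "q i = 0 \<or> degree (q i) < m" for i
  proof (cases "q i = 0")
    case False
    have "coeff (q i) r = 0" if "m \<le> r" for r
      using that middle_degree[of i] middle_coeff[of i]
      by (cases "r = m") (auto simp: q_def coeff_monom coeff_eq_0)
    then show ?thesis using False by (auto intro: degree_lessI)
  qed simp
  moreover have "F (2*m) = diag_mpoly (\<lambda>i. smult (c i) (\<rho> ^ m))"
    by (simp add: vec_eq_iff diag_mpoly_def top off_diagonal)
  moreover have "F m = diag_mpoly (\<lambda>i. smult (c i * \<sigma>^m) (monom 1 m) + q i)"
    by (simp add: vec_eq_iff diag_mpoly_def q_def off_diagonal)
  moreover have "degree (F j $ i $ k) < j" if "m + 1 \<le> j" "j \<le> 2*m" for i k j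
    using that upper off_diagonal by (cases "i = k") auto
  ultimately show ?thesis by blast
qed

lemma hermite_DW_shape:
  fixes b :: "'n::finite \<Rightarrow> real" and P F :: "nat \<Rightarrow> 'n mpoly"
  assumes "inj b" and OPS: "monic_OPS UNIV (wH b) P" and DW: "in_DW P F (2*m)"
  shows "\<exists>c q. (\<forall>i. q i = 0 \<or> degree (q i) < m) \<and>
      F (2*m) = diag_mpoly (\<lambda>i. smult (c i) (1 ^ m)) \<and>
      F m = diag_mpoly (\<lambda>i. smult (c i * (-2)^m) (monom 1 m) + q i) \<and>
      (\<forall>j. m + 1 \<le> j \<and> j \<le> 2*m \<longrightarrow> (\<forall>i k. degree (F j $ i $ k) < j))"
proof -
  have weight_OPS: "diagonal_weight_OPS (\<lambda>k. moment_functional UNIV (wH b k)) P"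
    by (rule hermite_weight_OPS[OF OPS])
  define f where "f i k j = (if j \<le> 2*m then F j $ i $ k else 0)" for i k j
  have f_zero: "f i k j = 0" if "2*m < j" for i k j using that by (simp add: f_def)
  obtain \<Lambda> where f_act: "\<And>n i k. scalar_dop_act (f i k) (2*m) (P n $ i $ i) = smult (\<Lambda> n $ i $ k) (P n $ k $ k)"
    using in_DW_diagonal_entries[OF diagonal_weight_OPS.off_diagonal_eq_0[OF weight_OPS] DW] unfolding f_def by blast
  have comm: "hermite_commutator_coeff (of_real (b i)) (of_real (b k)) (f i k) j = 0" for i k j
    by (rule hermite_commutator_coeff_eq_0[OF f_zero f_act hermite_OPS_eigen[OF OPS] hermite_OPS_eigen[OF OPS]
        diagonal_weight_OPS.degree_diagonal_entry[OF weight_OPS]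
        diagonal_weight_OPS.coeff_diagonal_entry_top[OF weight_OPS]])
  have off_diagonal: "f i k j = 0" if "i \<noteq> k" for i k j
    by (rule hermite_intertwiner_eq_0[OF f_zero comm]) (use \<open>inj b\<close> that in \<open>auto dest: injD\<close>)
  show ?thesis
  proof (rule diag_mpoly_shape[where c = "\<lambda>i. coeff (F (2*m) $ i $ i) 0"])
    fix i :: 'n
    have "\<And>j. 2*m < j \<Longrightarrow> f i i j = 0"
      and "\<And>j. hermite_commutator_coeff (of_real (b i)) (of_real (b i)) (f i i) j = 0"
      using f_zero comm by blast+
    note diagonal = hermite_intertwiner_diagonal[where m = m, OF this]
    show "F (2*m) $ i $ i = smult (coeff (F (2*m) $ i $ i) 0) (1 ^ m)"
      using diagonal(1) by (simp add: f_def)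
    show "degree (F m $ i $ i) \<le> m"
      using diagonal(3) by (simp add: f_def)
    show "coeff (F m $ i $ i) m = coeff (F (2*m) $ i $ i) 0 * (-2) ^ m"
      using diagonal(4) by (simp add: f_def mult.commute)
    show "degree (F j $ i $ i) < j" if "m < j" "j \<le> 2*m" for j
      using diagonal(2)[of j] that by (simp add: f_def)
  next
    show "F j $ i $ k = 0" if "i \<noteq> k" "j \<le> 2*m" for i k j
      using off_diagonal[OF that(1), of j] that(2) by (simp add: f_def)
  qed
qed

lemma laguerre_DW_shape:
  fixes a :: "'n::finite \<Rightarrow> real" and P F :: "nat \<Rightarrow> 'n mpoly"
  assumes a_gt: "\<And>i. -1 < a i" and a_diff: "\<And>i j. i \<noteq> j \<Longrightarrow> a i - a j \<notin> \<int>"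
    and OPS: "monic_OPS {0<..} (wL a) P" and DW: "in_DW P F (2*m)"
  shows "\<exists>c q. (\<forall>i. q i = 0 \<or> degree (q i) < m) \<and>
      F (2*m) = diag_mpoly (\<lambda>i. smult (c i) ([:0, 1:] ^ m)) \<and>
      F m = diag_mpoly (\<lambda>i. smult (c i * (-1)^m) (monom 1 m) + q i) \<and>
      (\<forall>j. m + 1 \<le> j \<and> j \<le> 2*m \<longrightarrow> (\<forall>i k. degree (F j $ i $ k) < j))"
proof -
  have weight_OPS: "diagonal_weight_OPS (\<lambda>k. moment_functional {0<..} (wL a k)) P"
    by (rule laguerre_weight_OPS[OF OPS a_gt])
  define f where "f i k j = (if j \<le> 2*m then F j $ i $ k else 0)" for i k j
  have f_zero: "f i k j = 0" if "2*m < j" for i k j using that by (simp add: f_def)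
  obtain \<Lambda> where f_act: "\<And>n i k. scalar_dop_act (f i k) (2*m) (P n $ i $ i) = smult (\<Lambda> n $ i $ k) (P n $ k $ k)"
    using in_DW_diagonal_entries[OF diagonal_weight_OPS.off_diagonal_eq_0[OF weight_OPS] DW] unfolding f_def by blast
  have comm: "laguerre_commutator_coeff (of_real (a i)) (of_real (a k)) (f i k) j = 0" for i k j
    by (rule laguerre_commutator_coeff_eq_0[OF f_zero f_act laguerre_OPS_eigen[OF OPS a_gt] laguerre_OPS_eigen[OF OPS a_gt]
        diagonal_weight_OPS.degree_diagonal_entry[OF weight_OPS]
        diagonal_weight_OPS.coeff_diagonal_entry_top[OF weight_OPS]])
  have off_diagonal: "f i k j = 0" if "i \<noteq> k" for i k j
  proof (rule laguerre_intertwiner_eq_0[OF f_zero comm])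
    show "complex_of_real (a k) - complex_of_real (a i) \<notin> \<int>"
      using a_diff[of k i] that by (simp flip: of_real_diff)
  qed
  show ?thesis
  proof (rule diag_mpoly_shape[where c = "\<lambda>i. coeff (F (2*m) $ i $ i) m"])
    fix i :: 'n
    have "\<And>j. 2*m < j \<Longrightarrow> f i i j = 0"
      and "\<And>j. laguerre_commutator_coeff (of_real (a i)) (of_real (a i)) (f i i) j = 0"
      using f_zero comm by blast+
    note diagonal = laguerre_intertwiner_diagonal[where m = m, OF this]
    show "F (2*m) $ i $ i = smult (coeff (F (2*m) $ i $ i) m) ([:0, 1:] ^ m)"
      using diagonal(1) by (simp add: f_def monom_altdef)
    show "degree (F m $ i $ i) \<le> m"
      using diagonal(3) by (simp add: f_def)
    show "coeff (F m $ i $ i) m = coeff (F (2*m) $ i $ i) m * (-1) ^ m"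
      using diagonal(4) by (simp add: f_def mult.commute)
    show "degree (F j $ i $ i) < j" if "m < j" "j \<le> 2*m" for j
      using diagonal(2)[of j] that by (simp add: f_def)
  next
    show "F j $ i $ k = 0" if "i \<noteq> k" "j \<le> 2*m" for i k j
      using off_diagonal[OF that(1), of j] that(2) by (simp add: f_def)
  qed
qed


theorem lemma3p9:
  shows
  "(\<forall>(b::'n::finite \<Rightarrow> real) P F (m::nat).
      inj b \<and> monic_OPS UNIV (wH b) P \<and> in_DW P F (2*m) \<and> F (2*m) \<noteq> 0 \<longrightarrow>
      (\<exists>(c::'n \<Rightarrow> complex) (q::'n \<Rightarrow> complex poly).
          (\<forall>i. q i = 0 \<or> degree (q i) < m) \<and>
          F (2*m) = diag_mpoly (\<lambda>i. smult (c i) (1 ^ m)) \<and>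
          F m = diag_mpoly (\<lambda>i. smult (c i * (-2)^m) (monom 1 m) + q i) \<and>
          (\<forall>j. m + 1 \<le> j \<and> j \<le> 2*m \<longrightarrow> (\<forall>i k. degree (F j $ i $ k) < j))))
   \<and>
   (\<forall>(a::'n \<Rightarrow> real) P F (m::nat).
      (\<forall>i. a i > -1) \<and> (\<forall>i j. i \<noteq> j \<longrightarrow> a i - a j \<notin> \<int>) \<and>
      monic_OPS {0<..} (wL a) P \<and> in_DW P F (2*m) \<and> F (2*m) \<noteq> 0 \<longrightarrow>
      (\<exists>(c::'n \<Rightarrow> complex) (q::'n \<Rightarrow> complex poly).
          (\<forall>i. q i = 0 \<or> degree (q i) < m) \<and>
          F (2*m) = diag_mpoly (\<lambda>i. smult (c i) ([:0, 1:] ^ m)) \<and>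
          F m = diag_mpoly (\<lambda>i. smult (c i * (-1)^m) (monom 1 m) + q i) \<and>
          (\<forall>j. m + 1 \<le> j \<and> j \<le> 2*m \<longrightarrow> (\<forall>i k. degree (F j $ i $ k) < j))))"
  by (intro conjI allI impI; elim conjE) (blast intro: hermite_DW_shape laguerre_DW_shape)+

end
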